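(* (a) If $K$ is a symmetric real compact nc convex set, then the restriction map $\rho:A(K)\to A(K_1)$, $\rho(f)=f|_{K_1}$, is an isometric unital order isomorphism onto $A(K_1)$. (b) If $K$ is any real compact nc convex set, then the restriction map $\rho_2:A(K)\to A(K_2,M_2(\mathbb{R}))$, $\rho_2(f)=f|_{K_2}$, is a contractive selfadjoint unital order embedding (i.e. $f\ge0$ iff $f(k)\ge0$ for all $k\in K_2$), and $\|f\|\le2\,\|f|_{K_2}\|$ for all $f\in A(K)$.
   Context: A real compact nc convex set over a real dual operator space $E$ is a graded set $K=\bigsqcup_nK_n$, $K_n\subseteq M_n(E)$ weak$^*$ compact, closed under direct sums $\sum\alpha_ix_i\alpha_i^{\mathsf T}$ and compressions $\beta^{\mathsf T}x\beta$ by real isometries. $K$ is symmetric if $k^{\mathsf T}=k$ (i.e. $k_{ji}=k_{ij}$) for every $k=[k_{ij}]\in K_n$ and every $n$. $A(K)$ is the real operator system of continuous nc affine maps $K\to\bigsqcup_nM_n(\mathbb{R})$ (graded, preserving direct sums and compressions, weak$^*$ continuous on each level), with $f^*(k)=f(k)^{\mathsf T}$, cones $M_n(A(K))^+=\{[f_{ij}]:[f_{ij}(k)]\ge0\ \forall k\}$, unit $1$, and norm $\|f\|=\sup_k\|f(k)\|$. $A(K_1)$ is the (classical) space of continuous affine real-valued functions on the compact convex set $K_1$ with sup norm and pointwise order; $A(K_2,M_2(\mathbb{R}))$ is the space of continuous affine maps $K_2\to M_2(\mathbb{R})$ with sup norm and pointwise order. *)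

theory Defs
  imports "HOL-Analysis.Analysis"
begin

text \<open>
The real dual operator space E is the dual of a real normed space F
(type 'f); its elements are bounded linear functionals 'f \<Rightarrow>L real and its
weak* topology is the topology of pointwise convergence on F.  Only the linear
and weak* structure of E enter the statement.  Matrices (over E or over the
reals) are functions nat \<Rightarrow> nat \<Rightarrow> _ ; an n x m matrix is one vanishing
outside the index block {..<n} x {..<m}.  An nc convex set is a family
K :: nat \<Rightarrow> _ set of which only the levels n \<ge> 1 are relevant.
\<close>

type_synonym 'f emat = "nat \<Rightarrow> nat \<Rightarrow> ('f \<Rightarrow>\<^sub>L real)"
type_synonym rmat = "nat \<Rightarrow> nat \<Rightarrow> real"

definition is_mat :: "nat \<Rightarrow> nat \<Rightarrow> (nat \<Rightarrow> nat \<Rightarrow> 'a::zero) \<Rightarrow> bool" where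
  "is_mat n m A \<longleftrightarrow> (\<forall>i j. (n \<le> i \<or> m \<le> j) \<longrightarrow> A i j = 0)"

definition mtr :: "(nat \<Rightarrow> nat \<Rightarrow> 'a) \<Rightarrow> (nat \<Rightarrow> nat \<Rightarrow> 'a)" where
  "mtr A = (\<lambda>i j. A j i)"

definition conj :: "rmat \<Rightarrow> nat \<Rightarrow> (nat \<Rightarrow> nat \<Rightarrow> 'a::real_vector) \<Rightarrow> (nat \<Rightarrow> nat \<Rightarrow> 'a)" where
  "conj \<alpha> m x = (\<lambda>a b. \<Sum>k<m. \<Sum>l<m. (\<alpha> a k * \<alpha> b l) *\<^sub>R x k l)"

definition isom :: "nat \<Rightarrow> nat \<Rightarrow> rmat \<Rightarrow> bool" where
  "isom n m \<alpha> \<longleftrightarrow> is_mat n m \<alpha> \<and>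
     (\<forall>j<m. \<forall>j'<m. (\<Sum>i<n. \<alpha> i j * \<alpha> i j') = (if j = j' then 1 else 0))"

text \<open>admissible data for a direct sum  sum_i alpha_i x_i alpha_i^T  at level n\<close>
definition dsum_data :: "nat \<Rightarrow> nat set \<Rightarrow> (nat \<Rightarrow> nat) \<Rightarrow> (nat \<Rightarrow> rmat) \<Rightarrow> bool" where
  "dsum_data n I d \<alpha> \<longleftrightarrow> 1 \<le> n \<and> finite I \<and> (\<forall>i\<in>I. 1 \<le> d i \<and> isom n (d i) (\<alpha> i)) \<and>
     (\<forall>a<n. \<forall>b<n. (\<Sum>i\<in>I. \<Sum>c<d i. \<alpha> i a c * \<alpha> i b c) = (if a = b then 1 else 0))"

definition dsum :: "nat set \<Rightarrow> (nat \<Rightarrow> nat) \<Rightarrow> (nat \<Rightarrow> rmat) \<Rightarrow> (nat \<Rightarrow> nat \<Rightarrow> nat \<Rightarrow> 'a::real_vector)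
     \<Rightarrow> (nat \<Rightarrow> nat \<Rightarrow> 'a)" where
  "dsum I d \<alpha> x = (\<lambda>a b. \<Sum>i\<in>I. conj (\<alpha> i) (d i) (x i) a b)"

definition wev :: "'f::real_normed_vector emat \<Rightarrow> (nat \<times> nat \<times> 'f \<Rightarrow> real)" where
  "wev x = (\<lambda>(i, j, v). blinfun_apply (x i j) v)"

definition wtop :: "'f::real_normed_vector emat topology" where
  "wtop = pullback_topology UNIV wev euclidean"

definition nc_convex :: "(nat \<Rightarrow> 'f::real_normed_vector emat set) \<Rightarrow> bool" where
  "nc_convex K \<longleftrightarrow>
     (\<forall>n\<ge>1. \<forall>x\<in>K n. is_mat n n x) \<and>
     (\<forall>n I d \<alpha> x. dsum_data n I d \<alpha> \<and> (\<forall>i\<in>I. x i \<in> K (d i)) \<longrightarrow> dsum I d \<alpha> x \<in> K n) \<and>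
     (\<forall>n m \<beta> x. 1 \<le> n \<and> 1 \<le> m \<and> isom n m \<beta> \<and> x \<in> K n \<longrightarrow> conj (mtr \<beta>) n x \<in> K m)"

definition compact_nc_convex :: "(nat \<Rightarrow> 'f::real_normed_vector emat set) \<Rightarrow> bool" where
  "compact_nc_convex K \<longleftrightarrow> nc_convex K \<and> (\<forall>n\<ge>1. compactin wtop (K n))"

definition nc_symmetric :: "(nat \<Rightarrow> 'f::real_normed_vector emat set) \<Rightarrow> bool" where
  "nc_symmetric K \<longleftrightarrow> (\<forall>n\<ge>1. \<forall>k\<in>K n. mtr k = k)"

text \<open>A(K): continuous nc affine maps, represented extensionally (zero off K).\<close>
definition ncA :: "(nat \<Rightarrow> 'f::real_normed_vector emat set) \<Rightarrow> (nat \<Rightarrow> 'f emat \<Rightarrow> rmat) set" where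
  "ncA K = {f.
     (\<forall>n x. \<not> (1 \<le> n \<and> x \<in> K n) \<longrightarrow> f n x = (\<lambda>i j. 0)) \<and>
     (\<forall>n\<ge>1. \<forall>x\<in>K n. is_mat n n (f n x)) \<and>
     (\<forall>n I d \<alpha> x. dsum_data n I d \<alpha> \<and> (\<forall>i\<in>I. x i \<in> K (d i)) \<longrightarrow>
         f n (dsum I d \<alpha> x) = dsum I d \<alpha> (\<lambda>i. f (d i) (x i))) \<and>
     (\<forall>n m \<beta> x. 1 \<le> n \<and> 1 \<le> m \<and> isom n m \<beta> \<and> x \<in> K n \<longrightarrow>
         f m (conj (mtr \<beta>) n x) = conj (mtr \<beta>) n (f n x)) \<and>
     (\<forall>n\<ge>1. continuous_map (subtopology wtop (K n)) euclidean (f n))}"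

definition psd :: "nat \<Rightarrow> rmat \<Rightarrow> bool" where
  "psd n A \<longleftrightarrow> (\<forall>i<n. \<forall>j<n. A i j = A j i) \<and>
     (\<forall>v::nat \<Rightarrow> real. 0 \<le> (\<Sum>i<n. \<Sum>j<n. v i * A i j * v j))"

definition mnorm :: "nat \<Rightarrow> rmat \<Rightarrow> real" where
  "mnorm n A = Sup (insert 0 {sqrt (\<Sum>i<n. (\<Sum>j<n. A i j * v j)\<^sup>2) | v. (\<Sum>j<n. (v j)\<^sup>2) \<le> 1})"

definition ncpos :: "(nat \<Rightarrow> 'f::real_normed_vector emat set) \<Rightarrow> (nat \<Rightarrow> 'f emat \<Rightarrow> rmat) \<Rightarrow> bool" where
  "ncpos K f \<longleftrightarrow> (\<forall>n\<ge>1. \<forall>x\<in>K n. psd n (f n x))"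

definition ncnorm :: "(nat \<Rightarrow> 'f::real_normed_vector emat set) \<Rightarrow> (nat \<Rightarrow> 'f emat \<Rightarrow> rmat) \<Rightarrow> real" where
  "ncnorm K f = Sup (insert 0 {mnorm n (f n x) | n x. 1 \<le> n \<and> x \<in> K n})"

definition ncunit :: "(nat \<Rightarrow> 'f::real_normed_vector emat set) \<Rightarrow> (nat \<Rightarrow> 'f emat \<Rightarrow> rmat)" where
  "ncunit K = (\<lambda>n x. if 1 \<le> n \<and> x \<in> K n then (\<lambda>i j. if i = j \<and> i < n then 1 else 0) else (\<lambda>i j. 0))"

definition ncadj :: "(nat \<Rightarrow> 'f emat \<Rightarrow> rmat) \<Rightarrow> (nat \<Rightarrow> 'f emat \<Rightarrow> rmat)" where
  "ncadj f = (\<lambda>n x. mtr (f n x))"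

definition ccomb :: "real \<Rightarrow> (nat \<Rightarrow> nat \<Rightarrow> 'a::real_vector) \<Rightarrow> (nat \<Rightarrow> nat \<Rightarrow> 'a) \<Rightarrow> (nat \<Rightarrow> nat \<Rightarrow> 'a)" where
  "ccomb t x y = (\<lambda>i j. t *\<^sub>R x i j + (1 - t) *\<^sub>R y i j)"

text \<open>A(K_1): continuous affine real functions on K_1 (elements of K_1 are 1x1 matrices over E)\<close>
definition A1 :: "(nat \<Rightarrow> 'f::real_normed_vector emat set) \<Rightarrow> ('f emat \<Rightarrow> real) set" where
  "A1 K = {g. (\<forall>x. x \<notin> K 1 \<longrightarrow> g x = 0) \<and>
     continuous_map (subtopology wtop (K 1)) euclidean g \<and>
     (\<forall>x\<in>K 1. \<forall>y\<in>K 1. \<forall>t\<in>{0..1}. g (ccomb t x y) = t * g x + (1 - t) * g y)}"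

definition norm1 :: "(nat \<Rightarrow> 'f::real_normed_vector emat set) \<Rightarrow> ('f emat \<Rightarrow> real) \<Rightarrow> real" where
  "norm1 K g = Sup (insert 0 {\<bar>g x\<bar> | x. x \<in> K 1})"

definition A2 :: "(nat \<Rightarrow> 'f::real_normed_vector emat set) \<Rightarrow> ('f emat \<Rightarrow> rmat) set" where
  "A2 K = {h. (\<forall>x. x \<notin> K 2 \<longrightarrow> h x = (\<lambda>i j. 0)) \<and>
     (\<forall>x\<in>K 2. is_mat 2 2 (h x)) \<and>
     continuous_map (subtopology wtop (K 2)) euclidean h \<and>
     (\<forall>x\<in>K 2. \<forall>y\<in>K 2. \<forall>t\<in>{0..1}. h (ccomb t x y) = ccomb t (h x) (h y))}"

definition norm2 :: "(nat \<Rightarrow> 'f::real_normed_vector emat set) \<Rightarrow> ('f emat \<Rightarrow> rmat) \<Rightarrow> real" where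
  "norm2 K h = Sup (insert 0 {mnorm 2 (h x) | x. x \<in> K 2})"

definition rho :: "(nat \<Rightarrow> 'f::real_normed_vector emat set) \<Rightarrow> (nat \<Rightarrow> 'f emat \<Rightarrow> rmat) \<Rightarrow> ('f emat \<Rightarrow> real)" where
  "rho K f = (\<lambda>x. if x \<in> K 1 then f 1 x 0 0 else 0)"

definition rho2 :: "(nat \<Rightarrow> 'f::real_normed_vector emat set) \<Rightarrow> (nat \<Rightarrow> 'f emat \<Rightarrow> rmat) \<Rightarrow> ('f emat \<Rightarrow> rmat)" where
  "rho2 K f = (\<lambda>x. if x \<in> K 2 then f 2 x else (\<lambda>i j. 0))"

end

theory Submission
  imports Defs
begin

text \<open>Compressions by isometries read off every entry of an nc affine map \<open>f\<close> from its first two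
  levels: \<open>f(x)\<^sub>i\<^sub>i\<close> is the value of \<open>f\<close> at the compression of \<open>x\<close> along \<open>e\<^sub>i\<close>, and \<open>f(x)\<^sub>i\<^sub>j\<close> is an
  entry of \<open>f\<close> at the compression of \<open>x\<close> onto \<open>span{e\<^sub>i, e\<^sub>j}\<close>. If \<open>K\<close> is symmetric, so is every
  \<open>f(x)\<close>, and polarization recovers \<open>f(x)\<^sub>i\<^sub>j\<close> from the first level alone. This gives injectivity
  of both restriction maps and the positivity statements. Since \<open>u\<^sup>T A v\<close> only sees the compression
  of \<open>A\<close> to \<open>span{u, v}\<close>, and for symmetric \<open>A\<close> the norm is controlled by the quadratic form,
  the norm of \<open>f\<close> is attained on the second level, and on the first one if \<open>K\<close> is symmetric.
  For surjectivity onto \<open>A(K\<^sub>1)\<close>, an affine \<open>g\<close> on \<open>K\<^sub>1\<close> is homogenized on the cone over \<open>K\<^sub>1\<close>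
  in \<open>\<real> \<times> E\<close> and extended linearly to \<open>L\<close>; then \<open>F(x)\<^sub>i\<^sub>j = L(\<delta>\<^sub>i\<^sub>j, x\<^sub>i\<^sub>j)\<close> is nc affine,
  because compressions and direct sums act on the pairs \<open>(\<delta>\<^sub>i\<^sub>j, x\<^sub>i\<^sub>j)\<close> by the same linear
  formulas.\<close>

section \<open>Matrix calculus\<close>

definition mat_mult :: "nat \<Rightarrow> rmat \<Rightarrow> rmat \<Rightarrow> rmat" where
  "mat_mult m A B = (\<lambda>i j. \<Sum>k<m. A i k * B k j)"

lemma sum_swap_pairs:
  fixes F :: "nat \<Rightarrow> nat \<Rightarrow> nat \<Rightarrow> nat \<Rightarrow> 'a::comm_monoid_add"
  shows "(\<Sum>k\<in>A. \<Sum>l\<in>B. \<Sum>p\<in>C. \<Sum>q\<in>D. F k l p q) = (\<Sum>p\<in>C. \<Sum>q\<in>D. \<Sum>k\<in>A. \<Sum>l\<in>B. F k l p q)"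
proof -
  have "(\<Sum>k\<in>A. \<Sum>l\<in>B. \<Sum>p\<in>C. \<Sum>q\<in>D. F k l p q) = (\<Sum>k\<in>A. \<Sum>p\<in>C. \<Sum>q\<in>D. \<Sum>l\<in>B. F k l p q)"
  proof (rule sum.cong[OF refl])
    fix k
    have "(\<Sum>l\<in>B. \<Sum>p\<in>C. \<Sum>q\<in>D. F k l p q) = (\<Sum>p\<in>C. \<Sum>l\<in>B. \<Sum>q\<in>D. F k l p q)"
      by (rule sum.swap)
    also have "\<dots> = (\<Sum>p\<in>C. \<Sum>q\<in>D. \<Sum>l\<in>B. F k l p q)"
      by (rule sum.cong[OF refl], rule sum.swap)
    finally show "(\<Sum>l\<in>B. \<Sum>p\<in>C. \<Sum>q\<in>D. F k l p q) = (\<Sum>p\<in>C. \<Sum>q\<in>D. \<Sum>l\<in>B. F k l p q)" .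
  qed
  also have "\<dots> = (\<Sum>p\<in>C. \<Sum>k\<in>A. \<Sum>q\<in>D. \<Sum>l\<in>B. F k l p q)"
    by (rule sum.swap)
  also have "\<dots> = (\<Sum>p\<in>C. \<Sum>q\<in>D. \<Sum>k\<in>A. \<Sum>l\<in>B. F k l p q)"
    by (rule sum.cong[OF refl], rule sum.swap)
  finally show ?thesis .
qed

lemma conj_conj:
  fixes x :: "nat \<Rightarrow> nat \<Rightarrow> 'a::real_vector"
  shows "conj g m (conj a n x) = conj (mat_mult m g a) n x"
proof (rule ext, rule ext)
  fix i j
  have "conj g m (conj a n x) i j =
     (\<Sum>k<m. \<Sum>l<m. \<Sum>p<n. \<Sum>q<n. (g i k * g j l * (a k p * a l q)) *\<^sub>R x p q)"
    by (simp add: conj_def scaleR_sum_right mult.assoc)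
  also have "\<dots> = (\<Sum>p<n. \<Sum>q<n. \<Sum>k<m. \<Sum>l<m. (g i k * g j l * (a k p * a l q)) *\<^sub>R x p q)"
    by (rule sum_swap_pairs)
  also have "\<dots> = conj (mat_mult m g a) n x i j"
    unfolding conj_def mat_mult_def
    by (simp add: scaleR_sum_left sum_product algebra_simps)
  finally show "conj g m (conj a n x) i j = conj (mat_mult m g a) n x i j" .
qed

lemma conj_add:
  fixes x y :: "nat \<Rightarrow> nat \<Rightarrow> 'a::real_vector"
  shows "conj g m (\<lambda>i j. x i j + y i j) = (\<lambda>i j. conj g m x i j + conj g m y i j)"
  by (simp add: conj_def scaleR_add_right sum.distrib)

lemma conj_cong: "(\<And>k l. k < m \<Longrightarrow> l < m \<Longrightarrow> x k l = y k l) \<Longrightarrow> conj g m x = conj g m y"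
  unfolding conj_def by (intro ext sum.cong refl) auto

lemma conj_is_mat: "is_mat n m g \<Longrightarrow> is_mat n n (conj g m x)"
  unfolding is_mat_def conj_def by auto

lemma is_mat_dsum: "(\<And>i. i \<in> I \<Longrightarrow> is_mat n (d i) (\<alpha> i)) \<Longrightarrow> is_mat n n (dsum I d \<alpha> z)"
  unfolding dsum_def is_mat_def conj_def by auto

lemma is_mat_mtr: "is_mat n m A \<Longrightarrow> is_mat m n (mtr A)"
  unfolding is_mat_def mtr_def by auto

lemma mtr_conj: "mtr (conj g m x) = conj g m (mtr x)"
  unfolding mtr_def conj_def by (rule ext, rule ext, subst sum.swap, simp add: mult.commute)

lemma mtr_dsum: "mtr (dsum I d \<alpha> y) = dsum I d \<alpha> (\<lambda>i. mtr (y i))"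
  unfolding dsum_def by (simp add: mtr_conj[symmetric]) (simp add: mtr_def)

lemma sum_if_eq_lessThan:
  fixes G :: "nat \<Rightarrow> 'a::comm_monoid_add"
  shows "(\<Sum>l<m. if l = b \<and> Q then G l else 0) = (if b < m \<and> Q then G b else 0)"
  by (cases Q) auto

lemma sum_if_eq2_lessThan:
  fixes F :: "nat \<Rightarrow> nat \<Rightarrow> 'a::comm_monoid_add"
  shows "(\<Sum>k<n. \<Sum>l<m. if k = a \<and> l = b \<and> P then F k l else 0) = (if a < n \<and> b < m \<and> P then F a b else 0)"
proof -
  have "(\<Sum>k<n. \<Sum>l<m. if k = a \<and> l = b \<and> P then F k l else 0) =
      (\<Sum>k<n. if k = a \<and> (b < m \<and> P) then F k b else 0)"
    by (intro sum.cong refl) (auto simp: sum_if_eq_lessThan[where Q="_ \<and> P", simplified])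
  also have "\<dots> = (if a < n \<and> b < m \<and> P then F a b else 0)"
    by (subst sum_if_eq_lessThan) auto
  finally show ?thesis .
qed

lemma sum_sq_eq_0_imp:
  fixes u :: "nat \<Rightarrow> real"
  assumes "(\<Sum>k<n. u k * u k) = 0" "k < n"
  shows "u k = 0"
  using assms sum_nonneg_eq_0_iff[of "{..<n}" "\<lambda>k. u k * u k"] by auto

definition unit_vec :: "nat \<Rightarrow> nat \<Rightarrow> real" where
  "unit_vec i = (\<lambda>k. if k = i then 1 else 0)"

lemma sum_unit_vec:
  fixes x :: "nat \<Rightarrow> nat \<Rightarrow> 'a::real_vector"
  assumes "i < n" "j < n"
  shows "(\<Sum>k<n. \<Sum>l<n. (unit_vec i k * unit_vec j l) *\<^sub>R x k l) = x i j"
proof -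
  have "(\<Sum>k<n. \<Sum>l<n. (unit_vec i k * unit_vec j l) *\<^sub>R x k l) =
      (\<Sum>k<n. \<Sum>l<n. if k = i \<and> l = j \<and> True then x k l else 0)"
    unfolding unit_vec_def by (intro sum.cong refl) auto
  also have "\<dots> = x i j" using assms by (subst sum_if_eq2_lessThan) auto
  finally show ?thesis .
qed

lemma unit_vec_inner:
  assumes "i < n"
  shows "(\<Sum>a<n. unit_vec i a * unit_vec j a) = (if i = j then 1 else 0)"
proof -
  have "(\<Sum>a<n. unit_vec i a * unit_vec j a) = (\<Sum>a<n. if a = i \<and> i = j then 1 else 0)"
    unfolding unit_vec_def by (intro sum.cong refl) auto
  then show ?thesis using assms by (simp add: sum_if_eq_lessThan)
qed

definition unit_vec_pair :: "nat \<Rightarrow> nat \<Rightarrow> nat \<Rightarrow> real" where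
  "unit_vec_pair i j = (\<lambda>k. (unit_vec i k + unit_vec j k) / sqrt 2)"

lemma sum_unit_vec_pair:
  fixes x :: "nat \<Rightarrow> nat \<Rightarrow> 'a::real_vector"
  assumes "i < n" "j < n"
  shows "(\<Sum>k<n. \<Sum>l<n. (unit_vec_pair i j k * unit_vec_pair i j l) *\<^sub>R x k l) =
    (1/2) *\<^sub>R (x i i + x i j + x j i + x j j)"
proof -
  have "unit_vec_pair i j k * unit_vec_pair i j l = (1/2) * (unit_vec i k * unit_vec i l
      + unit_vec i k * unit_vec j l + unit_vec j k * unit_vec i l + unit_vec j k * unit_vec j l)" for k l
    unfolding unit_vec_pair_def by (simp add: algebra_simps power2_eq_square[symmetric])
  then have "(unit_vec_pair i j k * unit_vec_pair i j l) *\<^sub>R y = (1/2) *\<^sub>R ((unit_vec i k * unit_vec i l) *\<^sub>R y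
      + (unit_vec i k * unit_vec j l) *\<^sub>R y + (unit_vec j k * unit_vec i l) *\<^sub>R y
      + (unit_vec j k * unit_vec j l) *\<^sub>R y)" for k l and y :: 'a
    by (simp add: scaleR_add_left[symmetric])
  then have "(\<Sum>k<n. \<Sum>l<n. (unit_vec_pair i j k * unit_vec_pair i j l) *\<^sub>R x k l) =
      (1/2) *\<^sub>R ((\<Sum>k<n. \<Sum>l<n. (unit_vec i k * unit_vec i l) *\<^sub>R x k l)
        + (\<Sum>k<n. \<Sum>l<n. (unit_vec i k * unit_vec j l) *\<^sub>R x k l)
        + (\<Sum>k<n. \<Sum>l<n. (unit_vec j k * unit_vec i l) *\<^sub>R x k l)
        + (\<Sum>k<n. \<Sum>l<n. (unit_vec j k * unit_vec j l) *\<^sub>R x k l))"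
    by (simp add: scaleR_add_right sum.distrib scaleR_sum_right)
  then show ?thesis using assms by (simp add: sum_unit_vec)
qed

lemma unit_vec_pair_inner:
  assumes "i < n" "j < n" "i \<noteq> j"
  shows "(\<Sum>k<n. unit_vec_pair i j k * unit_vec_pair i j k) = 1"
proof -
  have "unit_vec_pair i j k * unit_vec_pair i j k = (if k = i then 1/2 else 0) + (if k = j then 1/2 else 0)" for k
    using assms(3) unfolding unit_vec_pair_def unit_vec_def by (auto simp: power2_eq_square[symmetric] power_divide)
  then show ?thesis using assms by (simp add: sum.distrib)
qed

definition col_mat :: "nat \<Rightarrow> (nat \<Rightarrow> real) \<Rightarrow> rmat" where
  "col_mat n v = (\<lambda>a b. if b = 0 \<and> a < n then v a else 0)"

definition col2_mat :: "nat \<Rightarrow> (nat \<Rightarrow> real) \<Rightarrow> (nat \<Rightarrow> real) \<Rightarrow> rmat" where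
  "col2_mat n p q = (\<lambda>a b. if a < n \<and> b = 0 then p a else if a < n \<and> b = 1 then q a else 0)"

definition compress1 :: "nat \<Rightarrow> (nat \<Rightarrow> real) \<Rightarrow> (nat \<Rightarrow> nat \<Rightarrow> 'a::real_vector) \<Rightarrow> (nat \<Rightarrow> nat \<Rightarrow> 'a)" where
  "compress1 n v x = conj (mtr (col_mat n v)) n x"

definition compress2 :: "nat \<Rightarrow> (nat \<Rightarrow> real) \<Rightarrow> (nat \<Rightarrow> real) \<Rightarrow> (nat \<Rightarrow> nat \<Rightarrow> 'a::real_vector)
    \<Rightarrow> (nat \<Rightarrow> nat \<Rightarrow> 'a)" where
  "compress2 n p q x = conj (mtr (col2_mat n p q)) n x"

lemma isom_col_mat: "(\<Sum>a<n. v a * v a) = 1 \<Longrightarrow> isom n 1 (col_mat n v)"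
  unfolding isom_def is_mat_def col_mat_def by auto

lemma isom_col2_mat:
  "(\<Sum>a<n. p a * p a) = 1 \<Longrightarrow> (\<Sum>a<n. q a * q a) = 1 \<Longrightarrow> (\<Sum>a<n. p a * q a) = 0 \<Longrightarrow>
   isom n 2 (col2_mat n p q)"
  unfolding isom_def is_mat_def col2_mat_def by (auto simp: less_2_cases_iff mult.commute)

lemma compress1_00: "compress1 n v x 0 0 = (\<Sum>k<n. \<Sum>l<n. (v k * v l) *\<^sub>R x k l)"
  unfolding compress1_def conj_def mtr_def col_mat_def by auto

lemma compress1_00_real: "compress1 n v (A :: rmat) 0 0 = (\<Sum>k<n. \<Sum>l<n. v k * A k l * v l)"
  unfolding compress1_00 by (simp add: mult_ac)

lemma compress2_entries:
  "compress2 n p q x 0 0 = (\<Sum>k<n. \<Sum>l<n. (p k * p l) *\<^sub>R x k l)"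
  "compress2 n p q x 0 1 = (\<Sum>k<n. \<Sum>l<n. (p k * q l) *\<^sub>R x k l)"
  "compress2 n p q x 1 0 = (\<Sum>k<n. \<Sum>l<n. (q k * p l) *\<^sub>R x k l)"
  unfolding compress2_def conj_def mtr_def col2_mat_def by auto

lemma compress_unit_vec:
  fixes x :: "nat \<Rightarrow> nat \<Rightarrow> 'a::real_vector"
  assumes "i < n" "j < n"
  shows "compress1 n (unit_vec i) x 0 0 = x i i"
    and "compress2 n (unit_vec i) (unit_vec j) x 0 1 = x i j"
    and "compress2 n (unit_vec i) (unit_vec j) x 1 0 = x j i"
  using assms unfolding compress1_00 compress2_entries by (simp_all add: sum_unit_vec)

definition blk_incl :: "nat \<Rightarrow> nat \<Rightarrow> rmat" where
  "blk_incl n i = (\<lambda>a k. if k < n \<and> a = k + i*n then 1 else 0)"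

definition blk_diag :: "nat \<Rightarrow> (nat \<Rightarrow> nat \<Rightarrow> 'a::real_vector) \<Rightarrow> (nat \<Rightarrow> nat \<Rightarrow> 'a) \<Rightarrow> (nat \<Rightarrow> nat \<Rightarrow> 'a)" where
  "blk_diag n x y = dsum {0,1} (\<lambda>_. n) (blk_incl n) (\<lambda>i. if i = 0 then x else y)"

lemma isom_blk_incl:
  assumes i: "i \<le> 1"
  shows "isom (2*n) n (blk_incl n i)"
proof -
  have "(\<Sum>a<2*n. blk_incl n i a j * blk_incl n i a j') = (if j = j' then 1 else 0)"
    if "j < n" "j' < n" for j j'
  proof -
    have "(\<Sum>a<2*n. blk_incl n i a j * blk_incl n i a j') = (\<Sum>a<2*n. if a = j + i*n \<and> j = j' then 1 else 0)"
      unfolding blk_incl_def using that by (intro sum.cong refl) auto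
    also have "\<dots> = (if j = j' then 1 else 0)"
      using i that by (cases i) (auto simp: sum.If_cases)
    finally show ?thesis .
  qed
  moreover have "is_mat (2*n) n (blk_incl n i)"
    using i unfolding is_mat_def blk_incl_def by (auto, (cases i; simp)+)
  ultimately show ?thesis unfolding isom_def by auto
qed

lemma dsum_data_blk_incl: "1 \<le> n \<Longrightarrow> dsum_data (2*n) {0,1} (\<lambda>_. n) (blk_incl n)"
proof -
  have "(\<Sum>c<n. blk_incl n i a c * blk_incl n i b c) = (if a = b \<and> i*n \<le> a \<and> a < i*n + n then 1 else 0)" for i a b
  proof -
    have "(\<Sum>c<n. blk_incl n i a c * blk_incl n i b c) = (\<Sum>c<n. if c = a - i*n \<and> a = b \<and> i*n \<le> a then 1 else 0)"
      unfolding blk_incl_def by (intro sum.cong refl) auto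
    then show ?thesis by (auto simp: sum.If_cases)
  qed
  then show "1 \<le> n \<Longrightarrow> ?thesis" unfolding dsum_data_def using isom_blk_incl by auto
qed

lemma conj_blk_incl:
  fixes z :: "nat \<Rightarrow> nat \<Rightarrow> 'a::real_vector"
  shows "conj (blk_incl n i) n z a b =
    (if i*n \<le> a \<and> a < i*n+n \<and> i*n \<le> b \<and> b < i*n+n then z (a - i*n) (b - i*n) else 0)"
proof -
  have "conj (blk_incl n i) n z a b = (\<Sum>k<n. \<Sum>l<n. if k = a - i*n \<and> l = b - i*n \<and>
      i*n \<le> a \<and> a < i*n+n \<and> i*n \<le> b \<and> b < i*n+n then z k l else 0)"
    unfolding conj_def blk_incl_def by (intro sum.cong refl) auto
  then show ?thesis by (subst (asm) sum_if_eq2_lessThan) auto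
qed

lemma blk_diag_eq: "blk_diag n x y = (\<lambda>a b. conj (blk_incl n 0) n x a b + conj (blk_incl n 1) n y a b)"
  unfolding blk_diag_def dsum_def by simp

lemma blk_diag_entry:
  "blk_diag n x y a b = (if a < n \<and> b < n then x a b else 0) +
     (if n \<le> a \<and> a < n+n \<and> n \<le> b \<and> b < n+n then y (a-n) (b-n) else 0)"
  unfolding blk_diag_eq conj_blk_incl by simp

definition scalar_mat :: "nat \<Rightarrow> real \<Rightarrow> rmat" where
  "scalar_mat n c = (\<lambda>a p. if a = p \<and> p < n then c else 0)"

lemma conj_scalar_mat:
  fixes x :: "nat \<Rightarrow> nat \<Rightarrow> 'a::real_vector"
  shows "conj (scalar_mat n c) n x = (\<lambda>a b. if a < n \<and> b < n then (c*c) *\<^sub>R x a b else 0)"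
proof (rule ext, rule ext)
  fix a b
  have "conj (scalar_mat n c) n x a b =
      (\<Sum>k<n. \<Sum>l<n. (if k = a \<and> l = b \<and> a < n \<and> b < n then (c*c) *\<^sub>R x k l else 0))"
    unfolding conj_def scalar_mat_def by (intro sum.cong refl) auto
  then show "conj (scalar_mat n c) n x a b = (if a < n \<and> b < n then (c*c) *\<^sub>R x a b else 0)"
    by (simp add: sum_if_eq2_lessThan)
qed

text \<open>The isometry \<open>[\<surd>t I; \<surd>(1-t) I]\<close>: compressing \<open>x \<oplus> y\<close> by it gives \<open>t x + (1-t) y\<close>.\<close>

definition mix_isom :: "nat \<Rightarrow> real \<Rightarrow> rmat" where
  "mix_isom n t = (\<lambda>k a. (if a < n \<and> k = a then sqrt t else 0) + (if a < n \<and> k = a + n then sqrt (1-t) else 0))"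

lemma isom_mix_isom:
  assumes "0 \<le> t" "t \<le> 1"
  shows "isom (2*n) n (mix_isom n t)"
proof -
  have "(\<Sum>a<2*n. mix_isom n t a j * mix_isom n t a j') = (if j = j' then 1 else 0)"
    if "j < n" "j' < n" for j j'
  proof -
    have "(\<Sum>a<2*n. mix_isom n t a j * mix_isom n t a j') =
       (\<Sum>a<2*n. (if a = j \<and> j = j' then t else 0) + (if a = j + n \<and> j = j' then 1 - t else 0))"
      unfolding mix_isom_def using that assms by (intro sum.cong refl) (auto simp: algebra_simps)
    also have "\<dots> = (if j = j' then t + (1 - t) else 0)"
      using that by (simp add: sum.distrib sum_if_eq_lessThan[where Q="j = j'"])
    finally show ?thesis by simp
  qed
  moreover have "is_mat (2*n) n (mix_isom n t)" unfolding is_mat_def mix_isom_def by auto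
  ultimately show ?thesis unfolding isom_def by auto
qed

lemma mat_mult_mix_isom:
  "mat_mult (2*n) (mtr (mix_isom n t)) (blk_incl n 0) = scalar_mat n (sqrt t)"
  "mat_mult (2*n) (mtr (mix_isom n t)) (blk_incl n 1) = scalar_mat n (sqrt (1-t))"
proof (rule ext, rule ext)
  fix a p
  have "mat_mult (2*n) (mtr (mix_isom n t)) (blk_incl n 0) a p =
      (\<Sum>k<2*n. if k = p \<and> a = p \<and> p < n then sqrt t else 0)"
    unfolding mat_mult_def mtr_def mix_isom_def blk_incl_def by (intro sum.cong refl) auto
  then show "mat_mult (2*n) (mtr (mix_isom n t)) (blk_incl n 0) a p = scalar_mat n (sqrt t) a p"
    unfolding scalar_mat_def by (simp add: sum_if_eq_lessThan)
next
  show "mat_mult (2*n) (mtr (mix_isom n t)) (blk_incl n 1) = scalar_mat n (sqrt (1-t))"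
  proof (rule ext, rule ext)
    fix a p
    have "mat_mult (2*n) (mtr (mix_isom n t)) (blk_incl n 1) a p =
        (\<Sum>k<2*n. if k = p + n \<and> a = p \<and> p < n then sqrt (1-t) else 0)"
      unfolding mat_mult_def mtr_def mix_isom_def blk_incl_def by (intro sum.cong refl) auto
    then show "mat_mult (2*n) (mtr (mix_isom n t)) (blk_incl n 1) a p = scalar_mat n (sqrt (1-t)) a p"
      unfolding scalar_mat_def by (simp add: sum_if_eq_lessThan)
  qed
qed

lemma conj_mix_isom_blk_diag:
  fixes x y :: "nat \<Rightarrow> nat \<Rightarrow> 'a::real_vector"
  assumes "is_mat n n x" "is_mat n n y" "0 \<le> t" "t \<le> 1"
  shows "conj (mtr (mix_isom n t)) (2*n) (blk_diag n x y) = ccomb t x y"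
proof -
  have "conj (mtr (mix_isom n t)) (2*n) (blk_diag n x y) =
     (\<lambda>a b. conj (scalar_mat n (sqrt t)) n x a b + conj (scalar_mat n (sqrt (1-t))) n y a b)"
    unfolding blk_diag_eq conj_add conj_conj mat_mult_mix_isom by simp
  also have "\<dots> = ccomb t x y"
    unfolding conj_scalar_mat ccomb_def using assms unfolding is_mat_def
    by (intro ext) (auto simp: real_sqrt_mult[symmetric])
  finally show ?thesis .
qed

definition rot_mat :: rmat where
  "rot_mat = (\<lambda>a b. if a = 1 \<and> b = 0 then -1 else if a = 0 \<and> b = 1 then 1 else 0)"

definition refl_mat :: rmat where
  "refl_mat = (\<lambda>a b. if a = b \<and> a < 2 then (if a = 0 then 1 else -1) else 0)"

lemma isom_rot_mat: "isom 2 2 rot_mat"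
  unfolding isom_def is_mat_def rot_mat_def by (auto simp: numeral_2_eq_2 less_Suc_eq)

lemma isom_refl_mat: "isom 2 2 refl_mat"
  unfolding isom_def is_mat_def refl_mat_def by (auto simp: numeral_2_eq_2 less_Suc_eq)

lemma conj_2: "conj g 2 z a b = (g a 0 * g b 0) *\<^sub>R z 0 0 + (g a 0 * g b 1) *\<^sub>R z 0 1 +
    (g a 1 * g b 0) *\<^sub>R z 1 0 + (g a 1 * g b 1) *\<^sub>R z 1 1"
  unfolding conj_def by (simp add: numeral_2_eq_2)

section \<open>The operator norm of a real matrix\<close>

definition mvnorm :: "nat \<Rightarrow> rmat \<Rightarrow> (nat \<Rightarrow> real) \<Rightarrow> real" where
  "mvnorm n A v = sqrt (\<Sum>i<n. (\<Sum>j<n. A i j * v j)\<^sup>2)"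

lemma mnorm_eq_Sup_mvnorm: "mnorm n A = Sup (insert 0 {mvnorm n A v | v. (\<Sum>j<n. (v j)\<^sup>2) \<le> 1})"
  unfolding mnorm_def mvnorm_def by simp

lemma abs_le_one_if_sum_sq_le_one:
  fixes v :: "nat \<Rightarrow> real"
  assumes "(\<Sum>j<n. (v j)\<^sup>2) \<le> 1" "j < n"
  shows "\<bar>v j\<bar> \<le> 1"
proof -
  have "(v j)\<^sup>2 \<le> (\<Sum>j<n. (v j)\<^sup>2)" using assms(2) by (intro member_le_sum) auto
  then have "(v j)\<^sup>2 \<le> 1\<^sup>2" using assms(1) by simp
  then show ?thesis using abs_le_square_iff by (metis abs_one)
qed

lemma mvnorm_le_entry_sum:
  assumes "(\<Sum>j<n. (v j)\<^sup>2) \<le> 1"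
  shows "mvnorm n A v \<le> sqrt (real n * (\<Sum>i<n. \<Sum>j<n. \<bar>A i j\<bar>)\<^sup>2)"
proof -
  let ?S = "\<Sum>i<n. \<Sum>j<n. \<bar>A i j\<bar>"
  have "(\<Sum>j<n. A i j * v j)\<^sup>2 \<le> ?S\<^sup>2" if i: "i < n" for i
  proof -
    have "\<bar>\<Sum>j<n. A i j * v j\<bar> \<le> (\<Sum>j<n. \<bar>A i j * v j\<bar>)" by (rule sum_abs)
    also have "\<dots> \<le> (\<Sum>j<n. \<bar>A i j\<bar>)"
    proof (rule sum_mono)
      fix j assume "j \<in> {..<n}"
      then have "\<bar>v j\<bar> \<le> 1" using abs_le_one_if_sum_sq_le_one[OF assms] by auto
      then show "\<bar>A i j * v j\<bar> \<le> \<bar>A i j\<bar>" by (simp add: abs_mult mult_left_le)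
    qed
    also have "\<dots> \<le> ?S"
      using i by (intro member_le_sum[where f="\<lambda>i. \<Sum>j<n. \<bar>A i j\<bar>"]) (auto intro: sum_nonneg)
    finally show ?thesis by (metis abs_ge_zero power2_abs power_mono)
  qed
  then have "(\<Sum>i<n. (\<Sum>j<n. A i j * v j)\<^sup>2) \<le> (\<Sum>i<n. ?S\<^sup>2)" by (intro sum_mono) auto
  then show ?thesis unfolding mvnorm_def by simp
qed

lemma bdd_above_mvnorm: "bdd_above (insert 0 {mvnorm n A v | v. (\<Sum>j<n. (v j)\<^sup>2) \<le> 1})"
  unfolding bdd_above_def
  by (rule exI[of _ "sqrt (real n * (\<Sum>i<n. \<Sum>j<n. \<bar>A i j\<bar>)\<^sup>2)"]) (auto intro: mvnorm_le_entry_sum)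

lemma mvnorm_le_mnorm: "(\<Sum>j<n. (v j)\<^sup>2) \<le> 1 \<Longrightarrow> mvnorm n A v \<le> mnorm n A"
  unfolding mnorm_eq_Sup_mvnorm by (rule cSup_upper[OF _ bdd_above_mvnorm]) auto

lemma mnorm_least: "0 \<le> c \<Longrightarrow> (\<And>v. (\<Sum>j<n. (v j)\<^sup>2) \<le> 1 \<Longrightarrow> mvnorm n A v \<le> c) \<Longrightarrow> mnorm n A \<le> c"
  unfolding mnorm_eq_Sup_mvnorm by (rule cSup_least) auto

lemma mnorm_le_entry_sum: "mnorm n A \<le> sqrt (real n * (\<Sum>i<n. \<Sum>j<n. \<bar>A i j\<bar>)\<^sup>2)"
  by (rule mnorm_least) (auto intro: mvnorm_le_entry_sum)

lemma mvnorm_unit_vec_0: "mvnorm n A (unit_vec 0) = sqrt (\<Sum>i<n. (A i 0)\<^sup>2)" if "1 \<le> n"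
proof -
  have "(\<Sum>j<n. A i j * unit_vec 0 j) = A i 0" for i
  proof -
    have "(\<Sum>j<n. A i j * unit_vec 0 j) = (\<Sum>j<n. if j = 0 \<and> True then A i j else 0)"
      unfolding unit_vec_def by (intro sum.cong refl) auto
    then show ?thesis using that by (simp only: sum_if_eq_lessThan) simp
  qed
  then show ?thesis unfolding mvnorm_def by simp
qed

lemma abs_00_le_mnorm: "1 \<le> n \<Longrightarrow> \<bar>A 0 0\<bar> \<le> mnorm n A"
proof -
  assume n: "1 \<le> n"
  have "(A 0 0)\<^sup>2 \<le> (\<Sum>i<n. (A i 0)\<^sup>2)" using n by (intro member_le_sum) auto
  then have "\<bar>A 0 0\<bar> \<le> mvnorm n A (unit_vec 0)"
    by (simp add: mvnorm_unit_vec_0[OF n] real_le_rsqrt)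
  also have "\<dots> \<le> mnorm n A"
    using n by (intro mvnorm_le_mnorm) (simp add: power2_eq_square unit_vec_inner)
  finally show ?thesis .
qed

lemma col0_le_mnorm2: "sqrt ((A 0 0)\<^sup>2 + (A 1 0)\<^sup>2) \<le> mnorm 2 A"
proof -
  have "mvnorm 2 A (unit_vec 0) \<le> mnorm 2 A"
    by (intro mvnorm_le_mnorm) (simp add: unit_vec_def numeral_2_eq_2)
  then show ?thesis by (simp add: mvnorm_unit_vec_0 numeral_2_eq_2)
qed

lemma cauchy_schwarz2:
  fixes a b c d :: real
  shows "\<bar>c * a + d * b\<bar> \<le> sqrt (c\<^sup>2 + d\<^sup>2) * sqrt (a\<^sup>2 + b\<^sup>2)"
proof -
  have "(c\<^sup>2 + d\<^sup>2) * (a\<^sup>2 + b\<^sup>2) - (c * a + d * b)\<^sup>2 = (c * b - d * a)\<^sup>2"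
    by (simp add: power2_eq_square algebra_simps)
  then have "(c * a + d * b)\<^sup>2 \<le> (c\<^sup>2 + d\<^sup>2) * (a\<^sup>2 + b\<^sup>2)" by (metis diff_ge_0_iff_ge zero_le_power2)
  then have "sqrt ((c * a + d * b)\<^sup>2) \<le> sqrt ((c\<^sup>2 + d\<^sup>2) * (a\<^sup>2 + b\<^sup>2))" by (rule real_sqrt_le_mono)
  then show ?thesis by (simp add: real_sqrt_mult)
qed

lemma mnorm_le_bilinear:
  fixes A :: rmat
  assumes N: "0 \<le> N"
    and bound: "\<And>u v. (\<Sum>i<n. (u i)\<^sup>2) \<le> 1 \<Longrightarrow> (\<Sum>j<n. (v j)\<^sup>2) \<le> 1 \<Longrightarrow>
      (\<Sum>i<n. \<Sum>j<n. u i * A i j * v j) \<le> N"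
  shows "mnorm n A \<le> N"
proof (rule mnorm_least[OF N])
  fix v :: "nat \<Rightarrow> real" assume v: "(\<Sum>j<n. (v j)\<^sup>2) \<le> 1"
  define w where "w = (\<lambda>i. \<Sum>j<n. A i j * v j)"
  define W where "W = (\<Sum>i<n. (w i)\<^sup>2)"
  have W0: "0 \<le> W" unfolding W_def by (intro sum_nonneg) auto
  have mv: "mvnorm n A v = sqrt W" unfolding mvnorm_def W_def w_def by simp
  show "mvnorm n A v \<le> N"
  proof (cases "W = 0")
    case True then show ?thesis using N mv by simp
  next
    case False
    \<comment> \<open>test against \<open>u = A v / \<parallel>A v\<parallel>\<close>\<close>
    define u where "u = (\<lambda>i. w i / sqrt W)"
    have "(\<Sum>i<n. (u i)\<^sup>2) = (\<Sum>i<n. (w i)\<^sup>2) / W"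
      unfolding u_def using W0 by (simp add: power_divide sum_divide_distrib)
    then have u: "(\<Sum>i<n. (u i)\<^sup>2) \<le> 1" using False by (simp add: W_def)
    have "(\<Sum>i<n. \<Sum>j<n. u i * A i j * v j) = (\<Sum>i<n. u i * w i)"
      unfolding w_def by (simp add: sum_distrib_left mult.assoc)
    also have "\<dots> = W / sqrt W"
      unfolding u_def W_def by (simp add: power2_eq_square sum_divide_distrib)
    also have "\<dots> = sqrt W" using W0 by (rule real_div_sqrt)
    finally show ?thesis using bound[OF u v] mv by simp
  qed
qed

lemma mnorm_symmetric_le:
  fixes A :: rmat
  assumes N: "0 \<le> N" and sym: "\<And>i j. A i j = A j i"
    and quad: "\<And>u. \<bar>\<Sum>i<n. \<Sum>j<n. u i * A i j * u j\<bar> \<le> N * (\<Sum>i<n. (u i)\<^sup>2)"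
  shows "mnorm n A \<le> N"
proof (rule mnorm_le_bilinear[OF N])
  fix u v :: "nat \<Rightarrow> real"
  assume u: "(\<Sum>i<n. (u i)\<^sup>2) \<le> 1" and v: "(\<Sum>j<n. (v j)\<^sup>2) \<le> 1"
  define Q where "Q p = (\<Sum>i<n. \<Sum>j<n. p i * A i j * p j)" for p :: "nat \<Rightarrow> real"
  define B where "B = (\<Sum>i<n. \<Sum>j<n. u i * A i j * v j)"
  define p where "p = (\<lambda>i. u i + v i)"
  define m where "m = (\<lambda>i. u i - v i)"
  have polar: "Q p - Q m = 4 * B"
  proof -
    have "Q p - Q m = (\<Sum>i<n. \<Sum>j<n. 2 * (u i * A i j * v j) + 2 * (v i * A i j * u j))"
      unfolding Q_def p_def m_def by (simp add: sum_subtractf[symmetric] algebra_simps)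
    also have "\<dots> = 2 * B + 2 * (\<Sum>i<n. \<Sum>j<n. v i * A i j * u j)"
      unfolding B_def by (simp add: sum.distrib sum_distrib_left)
    also have "(\<Sum>i<n. \<Sum>j<n. v i * A i j * u j) = B"
      unfolding B_def by (subst sum.swap) (simp add: sym mult_ac)
    finally show ?thesis by simp
  qed
  have parallelogram: "(\<Sum>i<n. (p i)\<^sup>2) + (\<Sum>i<n. (m i)\<^sup>2) = 2 * (\<Sum>i<n. (u i)\<^sup>2) + 2 * (\<Sum>i<n. (v i)\<^sup>2)"
    unfolding p_def m_def by (simp add: power2_eq_square sum.distrib[symmetric] sum_distrib_left algebra_simps)
  have "4 * B \<le> \<bar>Q p\<bar> + \<bar>Q m\<bar>" using polar by simp
  also have "\<dots> \<le> N * (\<Sum>i<n. (p i)\<^sup>2) + N * (\<Sum>i<n. (m i)\<^sup>2)"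
    using quad[of p] quad[of m] unfolding Q_def by simp
  also have "\<dots> = N * ((\<Sum>i<n. (p i)\<^sup>2) + (\<Sum>i<n. (m i)\<^sup>2))" by (rule distrib_left[symmetric])
  also have "\<dots> \<le> N * 4"
    using parallelogram u v N by (intro mult_left_mono) auto
  finally show "B \<le> N" by simp
qed

lemma normalize_vector:
  fixes v :: "nat \<Rightarrow> real"
  assumes "(\<Sum>k<n. v k * v k) \<noteq> 0"
  obtains e where "0 < (\<Sum>k<n. v k * v k)" "(\<Sum>k<n. e k * e k) = 1"
    "\<And>k. v k = sqrt (\<Sum>k<n. v k * v k) * e k"
proof -
  let ?s = "\<Sum>k<n. v k * v k"
  have s0: "0 < ?s" using assms sum_nonneg[of "{..<n}" "\<lambda>k. v k * v k"] by fastforce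
  show ?thesis
  proof (rule that[OF s0])
    show "(\<Sum>k<n. v k / sqrt ?s * (v k / sqrt ?s)) = 1"
      using s0 by (simp add: sum_divide_distrib[symmetric])
    show "v k = sqrt ?s * (v k / sqrt ?s)" for k using s0 by simp
  qed
qed

lemma orthogonal_decomposition:
  fixes u e :: "nat \<Rightarrow> real"
  assumes e: "(\<Sum>i<n. e i * e i) = 1"
  obtains c where "\<And>i. i < n \<Longrightarrow> u i = c * e i" "c\<^sup>2 = (\<Sum>i<n. u i * u i)"
  | c r e' where "0 < r" "(\<Sum>i<n. e' i * e' i) = 1" "(\<Sum>i<n. e i * e' i) = 0"
      "\<And>i. u i = c * e i + r * e' i" "c\<^sup>2 + r\<^sup>2 = (\<Sum>i<n. u i * u i)"
proof -
  define c where "c = (\<Sum>i<n. e i * u i)"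
  define w where "w = (\<lambda>i. u i - c * e i)"
  define r2 where "r2 = (\<Sum>i<n. w i * w i)"
  have orth: "(\<Sum>i<n. e i * w i) = 0"
  proof -
    have "(\<Sum>i<n. e i * w i) = (\<Sum>i<n. e i * u i) - c * (\<Sum>i<n. e i * e i)"
      unfolding w_def by (simp add: right_diff_distrib sum_subtractf sum_distrib_left mult_ac)
    then show ?thesis using e unfolding c_def by simp
  qed
  have pyth: "(\<Sum>i<n. u i * u i) = c\<^sup>2 + r2"
  proof -
    have "(\<Sum>i<n. u i * u i) = (\<Sum>i<n. (c * e i + w i) * (c * e i + w i))"
      unfolding w_def by simp
    also have "\<dots> = c\<^sup>2 * (\<Sum>i<n. e i * e i) + 2 * c * (\<Sum>i<n. e i * w i) + r2"
      unfolding r2_def power2_eq_square by (simp add: algebra_simps sum.distrib sum_distrib_left)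
    finally show ?thesis using e orth by simp
  qed
  show ?thesis
  proof (cases "r2 = 0")
    case True
    then have "w i = 0" if "i < n" for i using sum_sq_eq_0_imp that unfolding r2_def by blast
    then show ?thesis using that(1)[of c] pyth True unfolding w_def by simp
  next
    case False
    then obtain e' where r2: "0 < r2" and e': "(\<Sum>i<n. e' i * e' i) = 1" and w: "\<And>i. w i = sqrt r2 * e' i"
      using normalize_vector[of w n] unfolding r2_def by blast
    show ?thesis
    proof (rule that(2)[of "sqrt r2" e' c])
      show "(\<Sum>i<n. e i * e' i) = 0"
        using orth r2 unfolding w by (simp add: sum_distrib_left[symmetric] mult.left_commute)
      show "u i = c * e i + sqrt r2 * e' i" for i using w[of i] unfolding w_def by simp
      show "c\<^sup>2 + (sqrt r2)\<^sup>2 = (\<Sum>i<n. u i * u i)" using pyth r2 by simp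
    qed (use r2 e' in simp_all)
  qed
qed

text \<open>The compression is onto \<open>span{u, e}\<close>, which has dimension at most two.\<close>

lemma bilinear_le_compression_unit:
  fixes A :: rmat
  assumes e: "(\<Sum>i<n. e i * e i) = 1" and u: "(\<Sum>i<n. u i * u i) \<le> 1"
  obtains "\<bar>\<Sum>i<n. \<Sum>j<n. u i * A i j * e j\<bar> \<le> \<bar>compress1 n e A 0 0\<bar>"
  | q where "(\<Sum>i<n. q i * q i) = 1" "(\<Sum>i<n. e i * q i) = 0"
      "\<bar>\<Sum>i<n. \<Sum>j<n. u i * A i j * e j\<bar> \<le> mnorm 2 (compress2 n e q A)"
proof -
  define B where "B x = (\<Sum>i<n. \<Sum>j<n. x i * A i j * e j)" for x :: "nat \<Rightarrow> real"
  from e show ?thesis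
  proof (cases rule: orthogonal_decomposition[where u = u])
    case (1 c)
    have c: "\<bar>c\<bar> \<le> 1" using 1(2) u by (simp add: abs_square_le_1[symmetric])
    have "B u = c * B e" unfolding B_def using 1(1) by (simp add: sum_distrib_left mult_ac)
    then have "\<bar>B u\<bar> \<le> \<bar>B e\<bar>" using c by (simp add: abs_mult mult_left_le_one_le)
    then show ?thesis using that(1) unfolding B_def compress1_00_real by simp
  next
    case (2 c r q)
    define M where "M = compress2 n e q A"
    have "B u = c * M 0 0 + r * M 1 0"
      unfolding B_def M_def compress2_entries 2(4)
      by (simp add: sum.distrib sum_distrib_left algebra_simps)
    then have "\<bar>B u\<bar> \<le> sqrt (c\<^sup>2 + r\<^sup>2) * sqrt ((M 0 0)\<^sup>2 + (M 1 0)\<^sup>2)"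
      using cauchy_schwarz2 by simp
    also have "\<dots> \<le> 1 * mnorm 2 M"
      using 2(5) u col0_le_mnorm2[of M] by (intro mult_mono) auto
    finally show ?thesis using that(2)[OF 2(2,3)] unfolding M_def B_def by simp
  qed
qed

lemma bilinear_le_compression:
  fixes A :: rmat
  assumes n: "1 \<le> n" and u: "(\<Sum>i<n. (u i)\<^sup>2) \<le> 1" and v: "(\<Sum>j<n. (v j)\<^sup>2) \<le> 1"
  obtains p where "(\<Sum>i<n. p i * p i) = 1"
      "(\<Sum>i<n. \<Sum>j<n. u i * A i j * v j) \<le> \<bar>compress1 n p A 0 0\<bar>"
  | p q where "(\<Sum>i<n. p i * p i) = 1" "(\<Sum>i<n. q i * q i) = 1" "(\<Sum>i<n. p i * q i) = 0"
      "(\<Sum>i<n. \<Sum>j<n. u i * A i j * v j) \<le> mnorm 2 (compress2 n p q A)"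
proof (cases "(\<Sum>j<n. v j * v j) = 0")
  case True
  then have "v j = 0" if "j < n" for j using sum_sq_eq_0_imp that by blast
  then show ?thesis using that(1)[of "unit_vec 0"] n by (simp add: unit_vec_inner)
next
  case False
  define s where "s = (\<Sum>j<n. v j * v j)"
  obtain e where e: "(\<Sum>j<n. e j * e j) = 1" and ve: "\<And>j. v j = sqrt s * e j"
    using normalize_vector[OF False] unfolding s_def by blast
  have "0 \<le> s" "sqrt s \<le> 1" using v by (simp_all add: s_def power2_eq_square sum_nonneg)
  have "(\<Sum>i<n. \<Sum>j<n. u i * A i j * v j) = sqrt s * (\<Sum>i<n. \<Sum>j<n. u i * A i j * e j)"
    unfolding ve by (simp add: sum_distrib_left algebra_simps)
  also have "\<dots> \<le> sqrt s * \<bar>\<Sum>i<n. \<Sum>j<n. u i * A i j * e j\<bar>"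
    using \<open>0 \<le> s\<close> by (intro mult_left_mono) auto
  also have "\<dots> \<le> \<bar>\<Sum>i<n. \<Sum>j<n. u i * A i j * e j\<bar>"
    using \<open>0 \<le> s\<close> \<open>sqrt s \<le> 1\<close> by (intro mult_left_le_one_le) auto
  finally have uv: "(\<Sum>i<n. \<Sum>j<n. u i * A i j * v j) \<le> \<bar>\<Sum>i<n. \<Sum>j<n. u i * A i j * e j\<bar>" .
  have u1: "(\<Sum>i<n. u i * u i) \<le> 1" using u by (simp add: power2_eq_square)
  from e u1 show ?thesis
  proof (cases rule: bilinear_le_compression_unit[where A = A])
    case 1
    then show ?thesis using that(1)[OF e] uv by simp
  next
    case (2 q)
    then show ?thesis using that(2)[OF e 2(1,2)] uv by simp
  qed
qed

section \<open>NC convex sets and nc affine maps\<close>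

lemma nc_convex_is_mat: "nc_convex K \<Longrightarrow> 1 \<le> n \<Longrightarrow> x \<in> K n \<Longrightarrow> is_mat n n x"
  unfolding nc_convex_def by blast

lemma nc_convex_compress:
  "nc_convex K \<Longrightarrow> 1 \<le> n \<Longrightarrow> 1 \<le> m \<Longrightarrow> isom n m \<beta> \<Longrightarrow> x \<in> K n \<Longrightarrow> conj (mtr \<beta>) n x \<in> K m"
  unfolding nc_convex_def by blast

lemma nc_convex_dsum:
  "nc_convex K \<Longrightarrow> dsum_data n I d \<alpha> \<Longrightarrow> (\<And>i. i \<in> I \<Longrightarrow> x i \<in> K (d i)) \<Longrightarrow> dsum I d \<alpha> x \<in> K n"
  unfolding nc_convex_def by blast

lemma ncA_zero_outside: "f \<in> ncA K \<Longrightarrow> \<not> (1 \<le> n \<and> x \<in> K n) \<Longrightarrow> f n x = (\<lambda>i j. 0)"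
  unfolding ncA_def by blast

lemma ncA_is_mat: "f \<in> ncA K \<Longrightarrow> 1 \<le> n \<Longrightarrow> x \<in> K n \<Longrightarrow> is_mat n n (f n x)"
  unfolding ncA_def by blast

lemma ncA_compress:
  "f \<in> ncA K \<Longrightarrow> 1 \<le> n \<Longrightarrow> 1 \<le> m \<Longrightarrow> isom n m \<beta> \<Longrightarrow> x \<in> K n \<Longrightarrow>
   f m (conj (mtr \<beta>) n x) = conj (mtr \<beta>) n (f n x)"
  unfolding ncA_def by blast

lemma ncA_dsum:
  "f \<in> ncA K \<Longrightarrow> dsum_data n I d \<alpha> \<Longrightarrow> (\<And>i. i \<in> I \<Longrightarrow> x i \<in> K (d i)) \<Longrightarrow>
   f n (dsum I d \<alpha> x) = dsum I d \<alpha> (\<lambda>i. f (d i) (x i))"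
  unfolding ncA_def by blast

lemma ncA_continuous: "f \<in> ncA K \<Longrightarrow> 1 \<le> n \<Longrightarrow> continuous_map (subtopology wtop (K n)) euclidean (f n)"
  unfolding ncA_def by blast

lemma ncA_entry_eq_0:
  assumes "f \<in> ncA K" "\<not> (1 \<le> n \<and> x \<in> K n \<and> i < n \<and> j < n)"
  shows "f n x i j = 0"
  using assms ncA_zero_outside[OF assms(1)] ncA_is_mat[OF assms(1)] unfolding is_mat_def
  by (metis not_le)

lemma nc_convex_compress1:
  assumes "nc_convex K" "1 \<le> n" "x \<in> K n" "(\<Sum>k<n. v k * v k) = 1"
  shows "compress1 n v x \<in> K 1"
  unfolding compress1_def using nc_convex_compress[OF assms(1,2) order_refl isom_col_mat[OF assms(4)] assms(3)] .

lemma ncA_compress1: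
  assumes "f \<in> ncA K" "1 \<le> n" "x \<in> K n" "(\<Sum>k<n. v k * v k) = 1"
  shows "f 1 (compress1 n v x) = compress1 n v (f n x)"
  unfolding compress1_def using ncA_compress[OF assms(1,2) order_refl isom_col_mat[OF assms(4)] assms(3)] .

lemma nc_convex_compress2:
  "nc_convex K \<Longrightarrow> 1 \<le> n \<Longrightarrow> x \<in> K n \<Longrightarrow>
   (\<Sum>a<n. p a * p a) = 1 \<Longrightarrow> (\<Sum>a<n. q a * q a) = 1 \<Longrightarrow> (\<Sum>a<n. p a * q a) = 0 \<Longrightarrow>
   compress2 n p q x \<in> K 2"
  unfolding compress2_def by (rule nc_convex_compress) (auto intro: isom_col2_mat)

lemma ncA_compress2:
  "f \<in> ncA K \<Longrightarrow> 1 \<le> n \<Longrightarrow> x \<in> K n \<Longrightarrow>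
   (\<Sum>a<n. p a * p a) = 1 \<Longrightarrow> (\<Sum>a<n. q a * q a) = 1 \<Longrightarrow> (\<Sum>a<n. p a * q a) = 0 \<Longrightarrow>
   f 2 (compress2 n p q x) = compress2 n p q (f n x)"
  unfolding compress2_def by (rule ncA_compress) (auto intro: isom_col2_mat)

lemma unit_vec_orthonormal:
  assumes "i < n" "j < n" "i \<noteq> j"
  shows "(\<Sum>a<n. unit_vec i a * unit_vec i a) = 1" "(\<Sum>a<n. unit_vec j a * unit_vec j a) = 1"
    "(\<Sum>a<n. unit_vec i a * unit_vec j a) = 0"
  using assms unit_vec_inner[of i n] unit_vec_inner[of j n] by auto

lemma nc_convex_blk_diag:
  "nc_convex K \<Longrightarrow> 1 \<le> n \<Longrightarrow> x \<in> K n \<Longrightarrow> y \<in> K n \<Longrightarrow> blk_diag n x y \<in> K (2*n)"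
  unfolding blk_diag_def by (rule nc_convex_dsum, assumption, rule dsum_data_blk_incl, auto)

lemma ncA_blk_diag:
  assumes "f \<in> ncA K" "1 \<le> n" "x \<in> K n" "y \<in> K n"
  shows "f (2*n) (blk_diag n x y) = blk_diag n (f n x) (f n y)"
  unfolding blk_diag_def
proof -
  have "f (2*n) (dsum {0,1} (\<lambda>_. n) (blk_incl n) (\<lambda>i. if i = 0 then x else y)) =
      dsum {0,1} (\<lambda>_. n) (blk_incl n) (\<lambda>i. f n (if i = 0 then x else y))"
    by (rule ncA_dsum[OF assms(1) dsum_data_blk_incl[OF assms(2)]]) (use assms in auto)
  also have "(\<lambda>i. f n (if i = 0 then x else y)) = (\<lambda>i. if i = 0 then f n x else f n y)"
    by auto
  finally show "f (2*n) (dsum {0,1} (\<lambda>_. n) (blk_incl n) (\<lambda>i. if i = 0 then x else y)) =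
      dsum {0,1} (\<lambda>_. n) (blk_incl n) (\<lambda>i. if i = 0 then f n x else f n y)" .
qed

lemma nc_convex_ccomb:
  assumes K: "nc_convex K" and n: "1 \<le> n" and xy: "x \<in> K n" "y \<in> K n" and t: "0 \<le> t" "t \<le> 1"
  shows "ccomb t x y \<in> K n"
proof -
  have "conj (mtr (mix_isom n t)) (2*n) (blk_diag n x y) \<in> K n"
    by (rule nc_convex_compress[OF K _ n isom_mix_isom[OF t] nc_convex_blk_diag[OF K n xy]]) (use n in auto)
  then show ?thesis
    using conj_mix_isom_blk_diag[OF nc_convex_is_mat[OF K n xy(1)] nc_convex_is_mat[OF K n xy(2)] t] by simp
qed

lemma ncA_ccomb:
  assumes K: "nc_convex K" and f: "f \<in> ncA K" and n: "1 \<le> n" and xy: "x \<in> K n" "y \<in> K n"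
    and t: "0 \<le> t" "t \<le> 1"
  shows "f n (ccomb t x y) = ccomb t (f n x) (f n y)"
proof -
  have "f n (conj (mtr (mix_isom n t)) (2*n) (blk_diag n x y)) =
      conj (mtr (mix_isom n t)) (2*n) (f (2*n) (blk_diag n x y))"
    by (rule ncA_compress[OF f _ n isom_mix_isom[OF t] nc_convex_blk_diag[OF K n xy]]) (use n in auto)
  also have "\<dots> = ccomb t (f n x) (f n y)"
    unfolding ncA_blk_diag[OF f n xy]
    by (rule conj_mix_isom_blk_diag[OF ncA_is_mat[OF f n xy(1)] ncA_is_mat[OF f n xy(2)] t])
  finally show ?thesis
    using conj_mix_isom_blk_diag[OF nc_convex_is_mat[OF K n xy(1)] nc_convex_is_mat[OF K n xy(2)] t] by simp
qed

lemma ncA_level1_via_level2: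
  assumes K: "nc_convex K" and f: "f \<in> ncA K" and y: "y \<in> K 1"
  shows "blk_diag 1 y y \<in> K 2" "f 2 (blk_diag 1 y y) 0 0 = f 1 y 0 0"
  using nc_convex_blk_diag[OF K _ y y] ncA_blk_diag[OF f _ y y] by (simp_all add: blk_diag_entry)

lemma ncA_diag_entry:
  assumes K: "nc_convex K" and f: "f \<in> ncA K" and n: "1 \<le> n" and x: "x \<in> K n" and i: "i < n"
  shows "compress1 n (unit_vec i) x \<in> K 1" "f n x i i = f 1 (compress1 n (unit_vec i) x) 0 0"
  using nc_convex_compress1[OF K n x] ncA_compress1[OF f n x] compress_unit_vec(1)[OF i i, of "f n x"] i
  by (simp_all add: unit_vec_inner)

lemma ncA_offdiag_entries:
  assumes K: "nc_convex K" and f: "f \<in> ncA K" and n: "1 \<le> n" and x: "x \<in> K n"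
    and ij: "i < n" "j < n" "i \<noteq> j"
  shows "compress2 n (unit_vec i) (unit_vec j) x \<in> K 2"
    "f n x i j = f 2 (compress2 n (unit_vec i) (unit_vec j) x) 0 1"
    "f n x j i = f 2 (compress2 n (unit_vec i) (unit_vec j) x) 1 0"
  using nc_convex_compress2[OF K n x unit_vec_orthonormal[OF ij]]
    ncA_compress2[OF f n x unit_vec_orthonormal[OF ij]] compress_unit_vec(2,3)[OF ij(1,2), of "f n x"]
  by simp_all

lemma ncA_pair_entry:
  assumes K: "nc_convex K" and f: "f \<in> ncA K" and n: "1 \<le> n" and x: "x \<in> K n"
    and ij: "i < n" "j < n" "i \<noteq> j"
  shows "compress1 n (unit_vec_pair i j) x \<in> K 1"
    "f 1 (compress1 n (unit_vec_pair i j) x) 0 0 = (f n x i i + f n x j j) / 2 + (f n x i j + f n x j i) / 2"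
  using nc_convex_compress1[OF K n x unit_vec_pair_inner[OF ij]]
    ncA_compress1[OF f n x unit_vec_pair_inner[OF ij]] sum_unit_vec_pair[OF ij(1,2), of "f n x"]
  by (simp_all add: compress1_00 algebra_simps add_divide_distrib)

lemma ncA_quadratic_form:
  assumes K: "nc_convex K" and f: "f \<in> ncA K" and n: "1 \<le> n" and x: "x \<in> K n"
  obtains y where "y \<in> K 1" "(\<Sum>i<n. \<Sum>j<n. u i * f n x i j * u j) = (\<Sum>k<n. (u k)\<^sup>2) * f 1 y 0 0"
proof (cases "(\<Sum>k<n. u k * u k) = 0")
  case True
  then have "(\<Sum>i<n. \<Sum>j<n. u i * f n x i j * u j) = 0" using sum_sq_eq_0_imp[OF True] by simp
  moreover have "compress1 n (unit_vec 0) x \<in> K 1" using ncA_diag_entry(1)[OF K f n x, of 0] n by simp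
  ultimately show ?thesis using that True by (simp add: power2_eq_square)
next
  case False
  define s where "s = (\<Sum>k<n. u k * u k)"
  obtain v where s: "0 < s" and v: "(\<Sum>k<n. v k * v k) = 1" and uv: "\<And>k. u k = sqrt s * v k"
    using normalize_vector[OF False] unfolding s_def by blast
  have "u i * f n x i j * u j = (sqrt s * sqrt s) * (v i * f n x i j * v j)" for i j
    unfolding uv by (simp only: mult_ac)
  moreover have "sqrt s * sqrt s = s" using s by simp
  ultimately have entry: "u i * f n x i j * u j = s * (v i * f n x i j * v j)" for i j by simp
  have "(\<Sum>i<n. \<Sum>j<n. u i * f n x i j * u j) = (\<Sum>i<n. \<Sum>j<n. s * (v i * f n x i j * v j))"
    by (intro sum.cong refl entry)
  also have "\<dots> = s * (\<Sum>i<n. \<Sum>j<n. v i * f n x i j * v j)" by (simp add: sum_distrib_left)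
  also have "(\<Sum>i<n. \<Sum>j<n. v i * f n x i j * v j) = f 1 (compress1 n v x) 0 0"
    using ncA_compress1[OF f n x v] by (simp add: compress1_00_real)
  finally show ?thesis
    using that[OF nc_convex_compress1[OF K n x v]] by (simp add: s_def power2_eq_square)
qed

text \<open>For \<open>y \<in> K\<^sub>2\<close> symmetric, \<open>w = (y + R\<^sup>T y R)/2\<close> (with \<open>R\<close> the rotation) is diagonal,
  hence fixed by the reflection \<open>D = diag(1,-1)\<close>; then \<open>f(w) = D f(w) D\<close> has vanishing
  off-diagonal entries, and these equal \<open>(f(y)\<^sub>0\<^sub>1 - f(y)\<^sub>1\<^sub>0)/2\<close>.\<close>

lemma ncA_symmetric_level2:
  assumes K: "nc_convex K" and f: "f \<in> ncA K" and y: "y \<in> K 2" and ys: "y 0 1 = y 1 0"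
  shows "f 2 y 0 1 = f 2 y 1 0"
proof -
  let ?y' = "conj (mtr rot_mat) 2 y"
  let ?w = "ccomb (1/2) y ?y'"
  have y': "?y' \<in> K 2" by (rule nc_convex_compress[OF K _ _ isom_rot_mat y]) auto
  have w: "?w \<in> K 2" by (rule nc_convex_ccomb[OF K _ y y']) auto
  have ym: "is_mat 2 2 y" by (rule nc_convex_is_mat[OF K _ y]) auto
  have "conj (mtr refl_mat) 2 ?w = ?w"
  proof (rule ext, rule ext)
    fix a b
    show "conj (mtr refl_mat) 2 ?w a b = ?w a b"
    proof (cases "a < 2 \<and> b < 2")
      case True
      have "?w 0 1 = 0" "?w 1 0 = 0" using ys unfolding ccomb_def by (simp_all add: conj_2 mtr_def rot_mat_def)
      then show ?thesis using True by (auto simp: less_2_cases_iff conj_2 mtr_def refl_mat_def)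
    next
      case False
      then show ?thesis using ym unfolding is_mat_def ccomb_def conj_def mtr_def rot_mat_def refl_mat_def by auto
    qed
  qed
  then have "f 2 ?w = conj (mtr refl_mat) 2 (f 2 ?w)"
    using ncA_compress[OF f _ _ isom_refl_mat w] by simp
  then have "f 2 ?w 0 1 = conj (mtr refl_mat) 2 (f 2 ?w) 0 1" by simp
  also have "\<dots> = - f 2 ?w 0 1" by (simp add: conj_2 mtr_def refl_mat_def)
  finally have "f 2 ?w 0 1 = 0" by simp
  moreover have "f 2 ?w = ccomb (1/2) (f 2 y) (conj (mtr rot_mat) 2 (f 2 y))"
    using ncA_ccomb[OF K f _ y y'] ncA_compress[OF f _ _ isom_rot_mat y] by simp
  then have "f 2 ?w 0 1 = (f 2 y 0 1 - f 2 y 1 0) / 2"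
    unfolding ccomb_def by (simp add: conj_2 mtr_def rot_mat_def)
  ultimately show ?thesis by simp
qed

lemma ncA_symmetric:
  assumes K: "nc_convex K" and S: "nc_symmetric K" and f: "f \<in> ncA K"
  shows "f n x i j = f n x j i"
proof (cases "1 \<le> n \<and> x \<in> K n \<and> i < n \<and> j < n \<and> i \<noteq> j")
  case True
  then have n: "1 \<le> n" and x: "x \<in> K n" and ij: "i < n" "j < n" "i \<noteq> j" by auto
  let ?y = "compress2 n (unit_vec i) (unit_vec j) x"
  have y: "?y \<in> K 2" by (rule ncA_offdiag_entries(1)[OF K f n x ij])
  then have "?y 0 1 = ?y 1 0" using S unfolding nc_symmetric_def mtr_def by (metis one_le_numeral)
  then show ?thesis
    using ncA_symmetric_level2[OF K f y] ncA_offdiag_entries(2,3)[OF K f n x ij] by simp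
next
  case False
  then show ?thesis using ncA_entry_eq_0[OF f] by (metis (full_types))
qed

lemma ncA_eqI_level1:
  assumes K: "nc_convex K" and S: "nc_symmetric K" and f: "f \<in> ncA K" and h: "h \<in> ncA K"
    and eq1: "\<And>y. y \<in> K 1 \<Longrightarrow> f 1 y 0 0 = h 1 y 0 0"
  shows "f = h"
proof (intro ext)
  fix n x i j
  show "f n x i j = h n x i j"
  proof (cases "1 \<le> n \<and> x \<in> K n \<and> i < n \<and> j < n")
    case True
    then have n: "1 \<le> n" and x: "x \<in> K n" and ij: "i < n" "j < n" by auto
    have diag: "f n x k k = h n x k k" if "k < n" for k
      using ncA_diag_entry[OF K f n x that] ncA_diag_entry[OF K h n x that] eq1 by metis
    show ?thesis
    proof (cases "i = j")
      case False
      have "(f n x i j + f n x j i) / 2 = (h n x i j + h n x j i) / 2"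
        using ncA_pair_entry[OF K f n x ij False] ncA_pair_entry[OF K h n x ij False] eq1 diag ij
        by (metis add_left_cancel)
      then show ?thesis using ncA_symmetric[OF K S f, of n x i j] ncA_symmetric[OF K S h, of n x i j] by simp
    qed (use diag ij in simp)
  qed (simp add: ncA_entry_eq_0[OF f] ncA_entry_eq_0[OF h])
qed

lemma ncA_eqI_level2:
  assumes K: "nc_convex K" and f: "f \<in> ncA K" and h: "h \<in> ncA K"
    and eq2: "\<And>y. y \<in> K 2 \<Longrightarrow> f 2 y = h 2 y"
  shows "f = h"
proof (intro ext)
  fix n x i j
  show "f n x i j = h n x i j"
  proof (cases "1 \<le> n \<and> x \<in> K n \<and> i < n \<and> j < n")
    case True
    then have n: "1 \<le> n" and x: "x \<in> K n" and ij: "i < n" "j < n" by auto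
    show ?thesis
    proof (cases "i = j")
      case True
      have "f 1 y 0 0 = h 1 y 0 0" if "y \<in> K 1" for y
        using ncA_level1_via_level2[OF K f that] ncA_level1_via_level2[OF K h that] eq2 by metis
      then show ?thesis
        using ncA_diag_entry[OF K f n x] ncA_diag_entry[OF K h n x] ij True by metis
    next
      case False
      then show ?thesis using ncA_offdiag_entries[OF K f n x ij False] ncA_offdiag_entries[OF K h n x ij False] eq2
        by metis
    qed
  qed (simp add: ncA_entry_eq_0[OF f] ncA_entry_eq_0[OF h])
qed

lemma ncpos_if_level1_nonneg:
  assumes K: "nc_convex K" and f: "f \<in> ncA K"
    and nonneg: "\<And>y. y \<in> K 1 \<Longrightarrow> 0 \<le> f 1 y 0 0"
    and sym: "\<And>n x i j. f n x i j = f n x j i"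
  shows "ncpos K f"
  unfolding ncpos_def psd_def
proof (intro allI impI ballI conjI)
  fix n x v assume n: "1 \<le> n" and x: "x \<in> K n"
  obtain y where "y \<in> K 1" "(\<Sum>i<n. \<Sum>j<n. v i * f n x i j * v j) = (\<Sum>k<n. (v k)\<^sup>2) * f 1 y 0 0"
    using ncA_quadratic_form[OF K f n x] .
  then show "0 \<le> (\<Sum>i<n. \<Sum>j<n. v i * f n x i j * v j)" using nonneg by (simp add: sum_nonneg)
qed (use sym in auto)

section \<open>Continuity and boundedness\<close>

lemma continuous_map_rmat_iff:
  "continuous_map X euclidean (h :: 'x \<Rightarrow> rmat) \<longleftrightarrow> (\<forall>i j. continuous_map X euclidean (\<lambda>x. h x i j))"
proof -
  have "continuous_map X euclidean h \<longleftrightarrow> (\<forall>i. continuous_map X euclidean (\<lambda>x. h x i))"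
    by (metis (no_types) continuous_map_componentwise_UNIV euclidean_product_topology)
  also have "\<dots> \<longleftrightarrow> (\<forall>i j. continuous_map X euclidean (\<lambda>x. h x i j))"
    by (metis (no_types) continuous_map_componentwise_UNIV euclidean_product_topology)
  finally show ?thesis .
qed

lemma continuous_map_wtop_eval: "continuous_map wtop euclidean (\<lambda>x. blinfun_apply (x k l) v)"
proof -
  have "continuous_map (pullback_topology UNIV wev euclidean) euclidean ((\<lambda>z. z (k, l, v)) \<circ> wev)"
    by (rule continuous_map_pullback)
       (metis (no_types) continuous_map_product_projection euclidean_product_topology UNIV_I)
  then show ?thesis unfolding wtop_def o_def wev_def by simp
qed

lemma continuous_map_into_wtop:
  assumes "\<And>k l v. continuous_map X euclidean (\<lambda>x. blinfun_apply (h x k l) v)"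
  shows "continuous_map X wtop h"
proof -
  have "\<forall>z. continuous_map X euclidean (\<lambda>x. (wev \<circ> h) x z)"
    using assms unfolding wev_def by (auto split: prod.splits)
  then have "continuous_map X euclidean (wev \<circ> h)"
    by (metis (no_types) continuous_map_componentwise_UNIV euclidean_product_topology)
  then show ?thesis unfolding wtop_def by (rule continuous_map_pullback') auto
qed

lemma continuous_map_conj: "continuous_map wtop wtop (conj g m)"
proof (rule continuous_map_into_wtop)
  fix k l v
  have e: "(\<lambda>x. blinfun_apply (conj g m x k l) v) =
      (\<lambda>x. \<Sum>a<m. \<Sum>b<m. (g k a * g l b) * blinfun_apply (x a b) v)"
    unfolding conj_def by (simp add: blinfun.sum_left blinfun.scaleR_left)
  show "continuous_map wtop euclidean (\<lambda>x. blinfun_apply (conj g m x k l) v)"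
    unfolding e
    by (intro continuous_map_sum finite_lessThan continuous_map_real_mult_left continuous_map_wtop_eval)
qed

lemma continuous_map_compress1:
  assumes "nc_convex K" "1 \<le> n" "(\<Sum>k<n. v k * v k) = 1"
  shows "continuous_map (subtopology wtop (K n)) (subtopology wtop (K 1)) (compress1 n v)"
  unfolding continuous_map_in_subtopology
proof
  show "continuous_map (subtopology wtop (K n)) wtop (compress1 n v)"
    unfolding compress1_def[abs_def] by (rule continuous_map_from_subtopology[OF continuous_map_conj])
  show "compress1 n v \<in> topspace (subtopology wtop (K n)) \<rightarrow> K 1"
    using nc_convex_compress1[OF assms(1,2) _ assms(3)] by auto
qed

lemma compactin_bounded_entries:
  assumes c: "compactin wtop S" and h: "continuous_map (subtopology wtop S) euclidean (h :: _ \<Rightarrow> rmat)"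
  obtains B where "\<And>x i j. x \<in> S \<Longrightarrow> \<bar>h x i j\<bar> \<le> B i j"
proof -
  have "\<exists>B. \<forall>x\<in>S. \<bar>h x i j\<bar> \<le> B" for i j
  proof -
    have "continuous_map (subtopology wtop S) euclidean (\<lambda>x. h x i j)"
      using h continuous_map_rmat_iff by blast
    moreover have "compactin (subtopology wtop S) S" using c by (simp add: compactin_subtopology)
    ultimately have "compactin euclidean ((\<lambda>x. h x i j) ` S)" using image_compactin by blast
    then have "bounded ((\<lambda>x. h x i j) ` S)" by (simp add: compact_imp_bounded)
    then show ?thesis unfolding bounded_real by auto
  qed
  define B where "B i j = (SOME b. \<forall>x\<in>S. \<bar>h x i j\<bar> \<le> b)" for i j
  have "\<forall>x\<in>S. \<bar>h x i j\<bar> \<le> B i j" for i j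
    unfolding B_def by (rule someI_ex) fact
  then show ?thesis using that by blast
qed

lemma ncA_mnorm_bounded:
  assumes K: "compact_nc_convex K" and f: "f \<in> ncA K" and n: "1 \<le> n"
  obtains B where "\<And>y. y \<in> K n \<Longrightarrow> mnorm n (f n y) \<le> B"
proof -
  obtain B where B: "\<And>y i j. y \<in> K n \<Longrightarrow> \<bar>f n y i j\<bar> \<le> B i j"
    using compactin_bounded_entries[of "K n" "f n"] K ncA_continuous[OF f n]
    unfolding compact_nc_convex_def using n by blast
  let ?T = "\<Sum>i<n. \<Sum>j<n. B i j"
  have "mnorm n (f n y) \<le> sqrt (real n * ?T\<^sup>2)" if y: "y \<in> K n" for y
  proof -
    have "0 \<le> (\<Sum>i<n. \<Sum>j<n. \<bar>f n y i j\<bar>)" by (intro sum_nonneg) auto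
    moreover have "(\<Sum>i<n. \<Sum>j<n. \<bar>f n y i j\<bar>) \<le> ?T" using B[OF y] by (intro sum_mono) auto
    ultimately have "(\<Sum>i<n. \<Sum>j<n. \<bar>f n y i j\<bar>)\<^sup>2 \<le> ?T\<^sup>2" by (intro power_mono) auto
    then have "sqrt (real n * (\<Sum>i<n. \<Sum>j<n. \<bar>f n y i j\<bar>)\<^sup>2) \<le> sqrt (real n * ?T\<^sup>2)"
      by (intro real_sqrt_le_mono mult_left_mono) auto
    with mnorm_le_entry_sum show ?thesis by (rule order_trans)
  qed
  then show ?thesis using that by blast
qed

section \<open>Norms\<close>

lemma Sup_insert_0_eqI:
  fixes S T :: "real set"
  assumes T: "bdd_above T" and TS: "\<And>b. b \<in> T \<Longrightarrow> \<exists>a\<in>S. b \<le> a"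
    and ST: "\<And>a. a \<in> S \<Longrightarrow> a \<le> Sup (insert 0 T)"
  shows "Sup (insert 0 S) = Sup (insert 0 T)"
proof (rule antisym)
  have T0: "0 \<le> Sup (insert 0 T)" using T by (intro cSup_upper) auto
  show "Sup (insert 0 S) \<le> Sup (insert 0 T)" using T0 ST by (intro cSup_least) auto
  have S: "bdd_above (insert 0 S)" using T0 ST unfolding bdd_above_def by (auto intro!: exI[of _ "Sup (insert 0 T)"])
  show "Sup (insert 0 T) \<le> Sup (insert 0 S)"
  proof (rule cSup_least)
    fix b assume "b \<in> insert 0 T"
    then obtain a where "a \<in> insert 0 S" "b \<le> a" using TS by blast
    then show "b \<le> Sup (insert 0 S)" using cSup_upper[OF _ S] by fastforce
  qed simp
qed

lemma ncA_mnorm_le_level2: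
  assumes K: "nc_convex K" and f: "f \<in> ncA K" and n: "1 \<le> n" and x: "x \<in> K n"
    and N: "0 \<le> N" and level2: "\<And>y. y \<in> K 2 \<Longrightarrow> mnorm 2 (f 2 y) \<le> N"
  shows "mnorm n (f n x) \<le> N"
proof (rule mnorm_le_bilinear[OF N])
  fix u v :: "nat \<Rightarrow> real"
  assume u: "(\<Sum>i<n. (u i)\<^sup>2) \<le> 1" and v: "(\<Sum>j<n. (v j)\<^sup>2) \<le> 1"
  show "(\<Sum>i<n. \<Sum>j<n. u i * f n x i j * v j) \<le> N"
  proof (cases rule: bilinear_le_compression[OF n u v, where A = "f n x"])
    case (1 p)
    let ?y = "compress1 n p x"
    have y: "?y \<in> K 1" by (rule nc_convex_compress1[OF K n x 1(1)])
    have "\<bar>compress1 n p (f n x) 0 0\<bar> = \<bar>f 2 (blk_diag 1 ?y ?y) 0 0\<bar>"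
      using ncA_compress1[OF f n x 1(1)] ncA_level1_via_level2(2)[OF K f y] by simp
    also have "\<dots> \<le> mnorm 2 (f 2 (blk_diag 1 ?y ?y))" by (rule abs_00_le_mnorm) simp
    also have "\<dots> \<le> N" by (rule level2[OF ncA_level1_via_level2(1)[OF K f y]])
    finally show ?thesis using 1(2) by simp
  next
    case (2 p q)
    then show ?thesis
      using level2[OF nc_convex_compress2[OF K n x 2(1-3)]] ncA_compress2[OF f n x 2(1-3)] by simp
  qed
qed

lemma ncA_mnorm_le_level1:
  assumes K: "nc_convex K" and S: "nc_symmetric K" and f: "f \<in> ncA K" and n: "1 \<le> n" and x: "x \<in> K n"
    and N: "0 \<le> N" and level1: "\<And>y. y \<in> K 1 \<Longrightarrow> \<bar>f 1 y 0 0\<bar> \<le> N"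
  shows "mnorm n (f n x) \<le> N"
proof (rule mnorm_symmetric_le[OF N ncA_symmetric[OF K S f]])
  fix u :: "nat \<Rightarrow> real"
  obtain y where y: "y \<in> K 1"
    and q: "(\<Sum>i<n. \<Sum>j<n. u i * f n x i j * u j) = (\<Sum>k<n. (u k)\<^sup>2) * f 1 y 0 0"
    using ncA_quadratic_form[OF K f n x] .
  have "\<bar>\<Sum>i<n. \<Sum>j<n. u i * f n x i j * u j\<bar> = (\<Sum>k<n. (u k)\<^sup>2) * \<bar>f 1 y 0 0\<bar>"
    unfolding q by (simp add: abs_mult sum_nonneg)
  also have "\<dots> \<le> (\<Sum>k<n. (u k)\<^sup>2) * N" by (rule mult_left_mono[OF level1[OF y]]) (simp add: sum_nonneg)
  finally show "\<bar>\<Sum>i<n. \<Sum>j<n. u i * f n x i j * u j\<bar> \<le> N * (\<Sum>i<n. (u i)\<^sup>2)"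
    by (simp add: mult.commute)
qed

lemma bdd_above_norm2_set:
  assumes "compact_nc_convex K" "f \<in> ncA K"
  shows "bdd_above {mnorm 2 (rho2 K f x) | x. x \<in> K 2}"
proof -
  obtain B where "\<And>y. y \<in> K 2 \<Longrightarrow> mnorm 2 (f 2 y) \<le> B" using ncA_mnorm_bounded[OF assms one_le_numeral] by blast
  then show ?thesis unfolding bdd_above_def rho2_def by auto
qed

lemma norm2_nonneg: "compact_nc_convex K \<Longrightarrow> f \<in> ncA K \<Longrightarrow> 0 \<le> norm2 K (rho2 K f)"
  unfolding norm2_def by (intro cSup_upper) (auto dest: bdd_above_norm2_set)

lemma ncnorm_eq_norm2:
  assumes KC: "compact_nc_convex K" and f: "f \<in> ncA K"
  shows "ncnorm K f = norm2 K (rho2 K f)"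
proof -
  have K: "nc_convex K" using KC unfolding compact_nc_convex_def by simp
  let ?T = "{mnorm 2 (rho2 K f x) | x. x \<in> K 2}"
  have bdd: "bdd_above (insert 0 ?T)" using bdd_above_norm2_set[OF KC f] by simp
  have level2: "mnorm 2 (f 2 y) \<le> norm2 K (rho2 K f)" if "y \<in> K 2" for y
    unfolding norm2_def using that by (intro cSup_upper[OF _ bdd]) (auto simp: rho2_def)
  show ?thesis unfolding ncnorm_def norm2_def
  proof (rule Sup_insert_0_eqI[OF bdd_above_norm2_set[OF KC f]])
    fix b assume "b \<in> ?T"
    then obtain x where "x \<in> K 2" "b = mnorm 2 (f 2 x)" unfolding rho2_def by auto
    then show "\<exists>a\<in>{mnorm n (f n x) | n x. 1 \<le> n \<and> x \<in> K n}. b \<le> a" by fastforce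
  next
    fix a assume "a \<in> {mnorm n (f n x) | n x. 1 \<le> n \<and> x \<in> K n}"
    then obtain n x where "a = mnorm n (f n x)" "1 \<le> n" "x \<in> K n" by blast
    then show "a \<le> Sup (insert 0 ?T)"
      using ncA_mnorm_le_level2[OF K f _ _ norm2_nonneg[OF KC f] level2] unfolding norm2_def by simp
  qed
qed

lemma ncnorm_eq_norm1:
  assumes KC: "compact_nc_convex K" and S: "nc_symmetric K" and f: "f \<in> ncA K"
  shows "ncnorm K f = norm1 K (rho K f)"
proof -
  have K: "nc_convex K" using KC unfolding compact_nc_convex_def by simp
  let ?T = "{\<bar>rho K f x\<bar> | x. x \<in> K 1}"
  obtain B where B: "\<And>y. y \<in> K 1 \<Longrightarrow> mnorm 1 (f 1 y) \<le> B"
    using ncA_mnorm_bounded[OF KC f order_refl] by blast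
  have entry: "\<bar>f 1 y 0 0\<bar> \<le> mnorm 1 (f 1 y)" for y by (rule abs_00_le_mnorm) simp
  have "\<bar>f 1 y 0 0\<bar> \<le> B" if "y \<in> K 1" for y using entry[of y] B[OF that] by linarith
  then have bdd: "bdd_above ?T" unfolding bdd_above_def rho_def by auto
  then have bdd0: "bdd_above (insert 0 ?T)" by simp
  have level1: "\<bar>f 1 y 0 0\<bar> \<le> norm1 K (rho K f)" if "y \<in> K 1" for y
    unfolding norm1_def using that by (intro cSup_upper[OF _ bdd0]) (auto simp: rho_def)
  have N: "0 \<le> norm1 K (rho K f)" unfolding norm1_def by (intro cSup_upper[OF _ bdd0]) simp
  show ?thesis unfolding ncnorm_def norm1_def
  proof (rule Sup_insert_0_eqI[OF bdd])
    fix b assume "b \<in> ?T"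
    then obtain x where "x \<in> K 1" "b = \<bar>f 1 x 0 0\<bar>" unfolding rho_def by auto
    then show "\<exists>a\<in>{mnorm n (f n x) | n x. 1 \<le> n \<and> x \<in> K n}. b \<le> a" using entry by fastforce
  next
    fix a assume "a \<in> {mnorm n (f n x) | n x. 1 \<le> n \<and> x \<in> K n}"
    then obtain n x where "a = mnorm n (f n x)" "1 \<le> n" "x \<in> K n" by blast
    then show "a \<le> Sup (insert 0 ?T)"
      using ncA_mnorm_le_level1[OF K S f _ _ N level1] unfolding norm1_def by simp
  qed
qed

section \<open>Extending affine functions from the first level\<close>

locale additive_cone =
  fixes C :: "'a::real_vector set" and G :: "'a \<Rightarrow> real"
  assumes zero_mem: "0 \<in> C"
    and add_mem: "a \<in> C \<Longrightarrow> b \<in> C \<Longrightarrow> a + b \<in> C"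
    and scale_mem: "a \<in> C \<Longrightarrow> 0 \<le> c \<Longrightarrow> c *\<^sub>R a \<in> C"
    and additive: "a \<in> C \<Longrightarrow> b \<in> C \<Longrightarrow> G (a + b) = G a + G b"
    and homogeneous: "a \<in> C \<Longrightarrow> 0 \<le> c \<Longrightarrow> G (c *\<^sub>R a) = c * G a"
begin

definition diffs :: "'a set" where
  "diffs = {a - b | a b. a \<in> C \<and> b \<in> C}"

definition lin_ext :: "'a \<Rightarrow> real" where
  "lin_ext z = (SOME r. \<exists>a b. a \<in> C \<and> b \<in> C \<and> z = a - b \<and> r = G a - G b)"

lemma lin_ext_diff:
  assumes a: "a \<in> C" and b: "b \<in> C"
  shows "lin_ext (a - b) = G a - G b"
proof -
  have ex: "\<exists>r a' b'. a' \<in> C \<and> b' \<in> C \<and> a - b = a' - b' \<and> r = G a' - G b'" using a b by blast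
  obtain a' b' where ab': "a' \<in> C" "b' \<in> C" "a - b = a' - b'" "lin_ext (a - b) = G a' - G b'"
    using someI_ex[OF ex] unfolding lin_ext_def by blast
  have "G (a + b') = G (a' + b)"
    using ab'(3) by (metis add.commute diff_add_eq diff_eq_eq)
  then show ?thesis using additive[OF a ab'(2)] additive[OF ab'(1) b] ab'(4) by simp
qed

lemma G_zero: "G 0 = 0"
  using homogeneous[OF zero_mem, of 0] by simp

lemma mem_diffs:
  assumes "a \<in> C"
  shows "a \<in> diffs \<and> lin_ext a = G a"
proof -
  have "a - 0 \<in> diffs" unfolding diffs_def using assms zero_mem by blast
  then show ?thesis using lin_ext_diff[OF assms zero_mem] G_zero by simp
qed

lemma lin_ext_add:
  assumes "z \<in> diffs" "w \<in> diffs"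
  shows "z + w \<in> diffs \<and> lin_ext (z + w) = lin_ext z + lin_ext w"
proof -
  obtain a b a' b' where C: "a \<in> C" "b \<in> C" "a' \<in> C" "b' \<in> C" and zw: "z = a - b" "w = a' - b'"
    using assms unfolding diffs_def by blast
  have sum: "z + w = (a + a') - (b + b')" using zw by (simp add: algebra_simps)
  have "lin_ext (z + w) = G (a + a') - G (b + b')"
    unfolding sum using C by (intro lin_ext_diff add_mem)
  also have "\<dots> = lin_ext z + lin_ext w"
    unfolding zw using C by (simp add: additive lin_ext_diff)
  finally show ?thesis using sum C add_mem unfolding diffs_def by blast
qed

lemma lin_ext_scale:
  assumes "z \<in> diffs"
  shows "c *\<^sub>R z \<in> diffs \<and> lin_ext (c *\<^sub>R z) = c * lin_ext z"
proof -
  obtain a b where C: "a \<in> C" "b \<in> C" and z: "z = a - b" using assms unfolding diffs_def by blast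
  have "lin_ext z = G a - G b" unfolding z using C by (rule lin_ext_diff)
  show ?thesis
  proof (cases "0 \<le> c")
    case True
    have cz: "c *\<^sub>R z = c *\<^sub>R a - c *\<^sub>R b" using z by (simp add: scaleR_diff_right)
    have "lin_ext (c *\<^sub>R z) = c * lin_ext z"
      unfolding cz lin_ext_diff[OF scale_mem[OF C(1) True] scale_mem[OF C(2) True]]
      using C True \<open>lin_ext z = G a - G b\<close> by (simp add: homogeneous right_diff_distrib)
    then show ?thesis using cz C True scale_mem unfolding diffs_def by blast
  next
    case False
    then have c: "0 \<le> - c" by simp
    have cz: "c *\<^sub>R z = (-c) *\<^sub>R b - (-c) *\<^sub>R a" using z by (simp add: scaleR_diff_right)
    have "lin_ext (c *\<^sub>R z) = c * lin_ext z"
      unfolding cz lin_ext_diff[OF scale_mem[OF C(2) c] scale_mem[OF C(1) c]]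
      using homogeneous[OF C(2) c] homogeneous[OF C(1) c] \<open>lin_ext z = G a - G b\<close>
      by (simp add: right_diff_distrib)
    then show ?thesis using cz C c scale_mem unfolding diffs_def by blast
  qed
qed

lemma lin_ext_sum:
  assumes "finite T" "\<And>t. t \<in> T \<Longrightarrow> z t \<in> diffs"
  shows "(\<Sum>t\<in>T. c t *\<^sub>R z t) \<in> diffs \<and> lin_ext (\<Sum>t\<in>T. c t *\<^sub>R z t) = (\<Sum>t\<in>T. c t * lin_ext (z t))"
  using assms
proof (induction T rule: finite_induct)
  case empty
  then show ?case using mem_diffs[OF zero_mem] G_zero by simp
next
  case (insert t T)
  have "c t *\<^sub>R z t \<in> diffs \<and> lin_ext (c t *\<^sub>R z t) = c t * lin_ext (z t)"
    using insert.prems by (intro lin_ext_scale) simp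
  moreover have "(\<Sum>t\<in>T. c t *\<^sub>R z t) \<in> diffs \<and> lin_ext (\<Sum>t\<in>T. c t *\<^sub>R z t) = (\<Sum>t\<in>T. c t * lin_ext (z t))"
    using insert.IH insert.prems by simp
  ultimately show ?case using lin_ext_add insert.hyps by simp
qed

lemma lin_ext_conj:
  assumes z: "\<And>k l. k < m \<Longrightarrow> l < m \<Longrightarrow> z k l \<in> diffs"
  shows "conj \<gamma> m z a b \<in> diffs \<and> lin_ext (conj \<gamma> m z a b) = conj \<gamma> m (\<lambda>k l. lin_ext (z k l)) a b"
proof -
  define r where "r k = (\<Sum>l<m. (\<gamma> a k * \<gamma> b l) *\<^sub>R z k l)" for k
  have r: "r k \<in> diffs \<and> lin_ext (r k) = (\<Sum>l<m. (\<gamma> a k * \<gamma> b l) * lin_ext (z k l))" if "k < m" for k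
    unfolding r_def using that z by (intro lin_ext_sum) auto
  have "(\<Sum>k<m. 1 *\<^sub>R r k) \<in> diffs \<and> lin_ext (\<Sum>k<m. 1 *\<^sub>R r k) = (\<Sum>k<m. 1 * lin_ext (r k))"
    using r by (intro lin_ext_sum) auto
  moreover have "conj \<gamma> m z a b = (\<Sum>k<m. 1 *\<^sub>R r k)" unfolding conj_def r_def by simp
  ultimately show ?thesis using r unfolding conj_def by simp
qed

end

text \<open>An affine function \<open>g\<close> on \<open>K\<^sub>1\<close> homogenizes to an additive
  and positively homogeneous function on it, whose linear extension \<open>L\<close> gives the nc affine
  extension \<open>F(x)\<^sub>i\<^sub>j = L(\<delta>\<^sub>i\<^sub>j, x\<^sub>i\<^sub>j)\<close>.\<close>

definition mat1 :: "'a::zero \<Rightarrow> (nat \<Rightarrow> nat \<Rightarrow> 'a)" where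
  "mat1 e = (\<lambda>i j. if i = 0 \<and> j = 0 then e else 0)"

definition level1_cone :: "(nat \<Rightarrow> 'f::real_normed_vector emat set) \<Rightarrow> (real \<times> ('f \<Rightarrow>\<^sub>L real)) set" where
  "level1_cone K = {(s, e). (s = 0 \<and> e = 0) \<or> (0 < s \<and> mat1 ((1/s) *\<^sub>R e) \<in> K 1)}"

definition homogenize :: "('f::real_normed_vector emat \<Rightarrow> real) \<Rightarrow> real \<times> ('f \<Rightarrow>\<^sub>L real) \<Rightarrow> real" where
  "homogenize g z = (if fst z = 0 then 0 else fst z * g (mat1 ((1 / fst z) *\<^sub>R snd z)))"

lemma A1_affine:
  "g \<in> A1 K \<Longrightarrow> x \<in> K 1 \<Longrightarrow> y \<in> K 1 \<Longrightarrow> 0 \<le> t \<Longrightarrow> t \<le> 1 \<Longrightarrow> g (ccomb t x y) = t * g x + (1 - t) * g y"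
  unfolding A1_def by auto

lemma level1_cone_add:
  assumes K: "nc_convex K" and g: "g \<in> A1 K" and a: "a \<in> level1_cone K" and b: "b \<in> level1_cone K"
  shows "a + b \<in> level1_cone K \<and> homogenize g (a + b) = homogenize g a + homogenize g b"
proof -
  obtain s e t d where ae: "a = (s, e)" and bd: "b = (t, d)" by fastforce
  show ?thesis
  proof (cases "s = 0 \<or> t = 0")
    case True
    then show ?thesis using a b ae bd unfolding level1_cone_def homogenize_def by auto
  next
    case False
    then have s: "0 < s" "mat1 ((1/s) *\<^sub>R e) \<in> K 1" and t: "0 < t" "mat1 ((1/t) *\<^sub>R d) \<in> K 1"
      using a b ae bd unfolding level1_cone_def by auto
    define r where "r = s / (s + t)"
    have r: "0 \<le> r" "r \<le> 1" "1 - r = t / (s + t)" unfolding r_def using s t by (auto simp: field_simps)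
    have cc: "ccomb r (mat1 ((1/s) *\<^sub>R e)) (mat1 ((1/t) *\<^sub>R d)) = mat1 ((1 / (s+t)) *\<^sub>R (e + d))"
      unfolding ccomb_def mat1_def r_def using s t by (intro ext) (simp add: scaleR_add_right field_simps)
    have "mat1 ((1 / (s+t)) *\<^sub>R (e + d)) \<in> K 1"
      using nc_convex_ccomb[OF K _ s(2) t(2) r(1,2)] cc by simp
    moreover have "(s + t) * g (mat1 ((1 / (s+t)) *\<^sub>R (e + d))) =
        s * g (mat1 ((1/s) *\<^sub>R e)) + t * g (mat1 ((1/t) *\<^sub>R d))"
      using A1_affine[OF g s(2) t(2) r(1,2)] cc r s t by (simp add: r_def distrib_left)
    ultimately show ?thesis using ae bd s t unfolding level1_cone_def homogenize_def by auto
  qed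
qed

lemma level1_cone_scale:
  assumes a: "a \<in> level1_cone K" and c: "0 \<le> c"
  shows "c *\<^sub>R a \<in> level1_cone K \<and> homogenize g (c *\<^sub>R a) = c * homogenize g a"
proof -
  obtain s e where ae: "a = (s, e)" by fastforce
  show ?thesis
  proof (cases "c = 0 \<or> s = 0")
    case True
    then show ?thesis using a ae unfolding level1_cone_def homogenize_def by auto
  next
    case False
    then have "0 < c" "0 < s" using c a ae unfolding level1_cone_def by auto
    moreover have "(1 / (c * s)) *\<^sub>R (c *\<^sub>R e) = (1/s) *\<^sub>R e" using \<open>0 < c\<close> by simp
    ultimately show ?thesis using a ae unfolding level1_cone_def homogenize_def by auto
  qed
qed

lemma additive_cone_level1_cone:
  assumes "nc_convex K" "g \<in> A1 K"
  shows "additive_cone (level1_cone K) (homogenize g)"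
proof
  show "0 \<in> level1_cone K" by (simp add: zero_prod_def level1_cone_def)
  show "a + b \<in> level1_cone K" "homogenize g (a + b) = homogenize g a + homogenize g b"
    if "a \<in> level1_cone K" "b \<in> level1_cone K" for a b
    using level1_cone_add[OF assms that] by simp_all
  show "c *\<^sub>R a \<in> level1_cone K" "homogenize g (c *\<^sub>R a) = c * homogenize g a"
    if "a \<in> level1_cone K" "0 \<le> c" for a c
    using level1_cone_scale[OF that] by simp_all
qed

lemma level1_cone_point:
  assumes K: "nc_convex K" and y: "y \<in> K 1"
  shows "(1, y 0 0) \<in> level1_cone K" "homogenize g (1, y 0 0) = g y"
proof -
  have "mat1 (y 0 0) = y"
    using nc_convex_is_mat[OF K _ y] unfolding mat1_def is_mat_def by (intro ext) auto
  then show "(1, y 0 0) \<in> level1_cone K" "homogenize g (1, y 0 0) = g y"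
    using y unfolding level1_cone_def homogenize_def by auto
qed

definition homog_mat :: "'f::real_normed_vector emat \<Rightarrow> nat \<Rightarrow> nat \<Rightarrow> real \<times> ('f \<Rightarrow>\<^sub>L real)" where
  "homog_mat x = (\<lambda>k l. (if k = l then 1 else 0, x k l))"

lemma conj_homog_mat: "conj \<gamma> m (homog_mat x) a b = (\<Sum>k<m. \<gamma> a k * \<gamma> b k, conj \<gamma> m x a b)"
proof -
  have "(\<Sum>k<m. \<Sum>l<m. \<gamma> a k * \<gamma> b l * (if k = l then 1 else 0)) = (\<Sum>k<m. \<gamma> a k * \<gamma> b k)"
    by (intro sum.cong refl) (simp add: if_distrib sum_if_eq_lessThan[where Q=True, simplified] cong: if_cong)
  then show ?thesis unfolding conj_def homog_mat_def by (simp add: prod_eq_iff fst_sum snd_sum)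
qed

definition nc_ext_entry :: "('f::real_normed_vector emat \<Rightarrow> real) \<Rightarrow> nat \<Rightarrow> 'f emat \<Rightarrow> nat \<Rightarrow> nat \<Rightarrow> real" where
  "nc_ext_entry g n x i j = (if i = j then g (compress1 n (unit_vec i) x)
     else g (compress1 n (unit_vec_pair i j) x) - (g (compress1 n (unit_vec i) x) + g (compress1 n (unit_vec j) x)) / 2)"

lemma homog_mat_entry:
  assumes K: "nc_convex K" and S: "nc_symmetric K" and g: "g \<in> A1 K"
    and n: "1 \<le> n" and x: "x \<in> K n" and ij: "i < n" "j < n"
  shows "homog_mat x i j \<in> additive_cone.diffs (level1_cone K)
    \<and> additive_cone.lin_ext (level1_cone K) (homogenize g) (homog_mat x i j) = nc_ext_entry g n x i j"
proof -
  interpret L: additive_cone "level1_cone K" "homogenize g" by (rule additive_cone_level1_cone[OF K g])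
  define p where "p v = (1::real, compress1 n v x 0 0)" for v
  have pt: "p v \<in> L.diffs \<and> L.lin_ext (p v) = g (compress1 n v x)" if "(\<Sum>k<n. v k * v k) = 1" for v
    using L.mem_diffs level1_cone_point[OF K nc_convex_compress1[OF K n x that]] unfolding p_def by simp
  have ei: "(\<Sum>k<n. unit_vec i k * unit_vec i k) = 1" "(\<Sum>k<n. unit_vec j k * unit_vec j k) = 1"
    using ij by (simp_all add: unit_vec_inner)
  have pi: "p (unit_vec i) = (1, x i i)" "p (unit_vec j) = (1, x j j)"
    unfolding p_def using compress_unit_vec(1) ij by auto
  show ?thesis
  proof (cases "i = j")
    case True
    then show ?thesis using pt[OF ei(1)] pi unfolding nc_ext_entry_def homog_mat_def by simp
  next
    case False
    have "x j i = x i j" using S x n unfolding nc_symmetric_def mtr_def by metis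
    then have "p (unit_vec_pair i j) = (1, (1/2) *\<^sub>R (x i i + x j j) + (1/2) *\<^sub>R (x i j + x i j))"
      unfolding p_def using ij by (simp add: compress1_00 sum_unit_vec_pair algebra_simps)
    then have hx: "homog_mat x i j = p (unit_vec_pair i j) + (- 1/2) *\<^sub>R p (unit_vec i) + (- 1/2) *\<^sub>R p (unit_vec j)"
      unfolding homog_mat_def pi using False by (simp add: algebra_simps scaleR_left_distrib[symmetric])
    have pair: "p (unit_vec_pair i j) \<in> L.diffs \<and> L.lin_ext (p (unit_vec_pair i j)) = g (compress1 n (unit_vec_pair i j) x)"
      by (rule pt[OF unit_vec_pair_inner[OF ij False]])
    have si: "(- 1/2) *\<^sub>R p (unit_vec i) \<in> L.diffs \<and>
        L.lin_ext ((- 1/2) *\<^sub>R p (unit_vec i)) = - g (compress1 n (unit_vec i) x) / 2"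
      using L.lin_ext_scale[OF pt[OF ei(1), THEN conjunct1], of "- 1/2"] pt[OF ei(1)] by simp
    have sj: "(- 1/2) *\<^sub>R p (unit_vec j) \<in> L.diffs \<and>
        L.lin_ext ((- 1/2) *\<^sub>R p (unit_vec j)) = - g (compress1 n (unit_vec j) x) / 2"
      using L.lin_ext_scale[OF pt[OF ei(2), THEN conjunct1], of "- 1/2"] pt[OF ei(2)] by simp
    note step = L.lin_ext_add[OF pair[THEN conjunct1] si[THEN conjunct1]]
    show ?thesis
      using L.lin_ext_add[OF step[THEN conjunct1] sj[THEN conjunct1]] step pair si sj False
      unfolding hx nc_ext_entry_def by (simp add: add_divide_distrib)
  qed
qed

definition nc_ext :: "(nat \<Rightarrow> 'f::real_normed_vector emat set) \<Rightarrow> ('f emat \<Rightarrow> real) \<Rightarrow> nat \<Rightarrow> 'f emat \<Rightarrow> rmat" where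
  "nc_ext K g n x = (if 1 \<le> n \<and> x \<in> K n then
     (\<lambda>i j. if i < n \<and> j < n then additive_cone.lin_ext (level1_cone K) (homogenize g) (homog_mat x i j) else 0)
   else (\<lambda>i j. 0))"

lemma lin_ext_conj_homog_mat:
  assumes K: "nc_convex K" and S: "nc_symmetric K" and g: "g \<in> A1 K" and d: "1 \<le> d" and x: "x \<in> K d"
  shows "conj \<gamma> d (homog_mat x) a b \<in> additive_cone.diffs (level1_cone K) \<and>
    additive_cone.lin_ext (level1_cone K) (homogenize g) (conj \<gamma> d (homog_mat x) a b) =
    conj \<gamma> d (nc_ext K g d x) a b"
proof -
  interpret L: additive_cone "level1_cone K" "homogenize g" by (rule additive_cone_level1_cone[OF K g])
  have "conj \<gamma> d (\<lambda>k l. L.lin_ext (homog_mat x k l)) = conj \<gamma> d (nc_ext K g d x)"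
    using d x by (intro conj_cong) (simp add: nc_ext_def)
  then show ?thesis using L.lin_ext_conj[of d "homog_mat x" \<gamma> a b] homog_mat_entry[OF K S g d x] by auto
qed

lemma nc_ext_compress:
  assumes K: "nc_convex K" and S: "nc_symmetric K" and g: "g \<in> A1 K"
    and n: "1 \<le> n" and m: "1 \<le> m" and \<beta>: "isom n m \<beta>" and x: "x \<in> K n"
  shows "nc_ext K g m (conj (mtr \<beta>) n x) = conj (mtr \<beta>) n (nc_ext K g n x)"
proof (intro ext)
  fix a b
  let ?y = "conj (mtr \<beta>) n x"
  have y: "?y \<in> K m" by (rule nc_convex_compress[OF K n m \<beta> x])
  show "nc_ext K g m ?y a b = conj (mtr \<beta>) n (nc_ext K g n x) a b"
  proof (cases "a < m \<and> b < m")
    case True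
    then have "homog_mat ?y a b = conj (mtr \<beta>) n (homog_mat x) a b"
      using \<beta> unfolding conj_homog_mat isom_def by (simp add: homog_mat_def mtr_def)
    then show ?thesis
      using True y m lin_ext_conj_homog_mat[OF K S g n x, of "mtr \<beta>" a b] by (simp add: nc_ext_def)
  next
    case False
    have "is_mat m m (conj (mtr \<beta>) n (nc_ext K g n x))"
      using \<beta> unfolding isom_def by (blast intro: conj_is_mat is_mat_mtr)
    then show ?thesis using False unfolding nc_ext_def is_mat_def by auto
  qed
qed

lemma nc_ext_dsum:
  assumes K: "nc_convex K" and S: "nc_symmetric K" and g: "g \<in> A1 K"
    and D: "dsum_data n I d \<alpha>" and x: "\<And>i. i \<in> I \<Longrightarrow> x i \<in> K (d i)"
  shows "nc_ext K g n (dsum I d \<alpha> x) = dsum I d \<alpha> (\<lambda>i. nc_ext K g (d i) (x i))"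
proof (intro ext)
  interpret L: additive_cone "level1_cone K" "homogenize g" by (rule additive_cone_level1_cone[OF K g])
  fix a b
  let ?y = "dsum I d \<alpha> x"
  have y: "?y \<in> K n" by (rule nc_convex_dsum[OF K D x])
  have n: "1 \<le> n" and I: "finite I" and di: "\<And>i. i \<in> I \<Longrightarrow> 1 \<le> d i \<and> isom n (d i) (\<alpha> i)"
    and unit: "\<forall>a<n. \<forall>b<n. (\<Sum>i\<in>I. \<Sum>c<d i. \<alpha> i a c * \<alpha> i b c) = (if a = b then 1 else 0)"
    using D unfolding dsum_data_def by auto
  show "nc_ext K g n ?y a b = dsum I d \<alpha> (\<lambda>i. nc_ext K g (d i) (x i)) a b"
  proof (cases "a < n \<and> b < n")
    case True
    let ?z = "\<lambda>i. conj (\<alpha> i) (d i) (homog_mat (x i)) a b"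
    have blocks: "?z i \<in> L.diffs \<and> L.lin_ext (?z i) = conj (\<alpha> i) (d i) (nc_ext K g (d i) (x i)) a b"
      if "i \<in> I" for i
      using lin_ext_conj_homog_mat[OF K S g _ x[OF that]] di[OF that] by blast
    have "homog_mat ?y a b = (if a = b then 1 else 0, ?y a b)" by (simp add: homog_mat_def)
    also have "\<dots> = (\<Sum>i\<in>I. 1 *\<^sub>R ?z i)"
      using True unit by (simp add: conj_homog_mat dsum_def prod_eq_iff fst_sum snd_sum)
    finally have "nc_ext K g n ?y a b = L.lin_ext (\<Sum>i\<in>I. 1 *\<^sub>R ?z i)"
      using True y n by (simp add: nc_ext_def)
    also have "\<dots> = (\<Sum>i\<in>I. 1 * L.lin_ext (?z i))"
      using L.lin_ext_sum[OF I, of ?z "\<lambda>_. 1"] blocks by blast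
    also have "\<dots> = dsum I d \<alpha> (\<lambda>i. nc_ext K g (d i) (x i)) a b"
      using blocks unfolding dsum_def by simp
    finally show ?thesis .
  next
    case False
    have "is_mat n n (dsum I d \<alpha> (\<lambda>i. nc_ext K g (d i) (x i)))"
      using di unfolding isom_def by (blast intro: is_mat_dsum)
    then show ?thesis using False unfolding nc_ext_def is_mat_def by auto
  qed
qed

lemma A1_continuous: "g \<in> A1 K \<Longrightarrow> continuous_map (subtopology wtop (K 1)) euclidean g"
  unfolding A1_def by blast

lemma nc_ext_continuous:
  assumes K: "nc_convex K" and S: "nc_symmetric K" and g: "g \<in> A1 K" and n: "1 \<le> n"
  shows "continuous_map (subtopology wtop (K n)) euclidean (nc_ext K g n)"
  unfolding continuous_map_rmat_iff
proof (intro allI)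
  fix i j
  have g_compress: "continuous_map (subtopology wtop (K n)) euclidean (\<lambda>x. g (compress1 n v x))"
    if "(\<Sum>k<n. v k * v k) = 1" for v
    using continuous_map_compose[OF continuous_map_compress1[OF K n that] A1_continuous[OF g]]
    by (simp add: o_def)
  show "continuous_map (subtopology wtop (K n)) euclidean (\<lambda>x. nc_ext K g n x i j)"
  proof (cases "i < n \<and> j < n")
    case True
    then have "continuous_map (subtopology wtop (K n)) euclidean (\<lambda>x. nc_ext_entry g n x i j)"
      unfolding nc_ext_entry_def using g_compress unit_vec_inner unit_vec_pair_inner
      by (auto intro!: continuous_map_diff continuous_map_real_divide continuous_map_add)
    then show ?thesis
      by (rule continuous_map_eq) (use True homog_mat_entry[OF K S g n] n in \<open>auto simp: nc_ext_def\<close>)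
  next
    case False
    then have "(\<lambda>x. nc_ext K g n x i j) = (\<lambda>x. 0)" by (auto simp: nc_ext_def)
    then show ?thesis by simp
  qed
qed

lemma nc_ext_in_ncA:
  assumes K: "nc_convex K" and S: "nc_symmetric K" and g: "g \<in> A1 K"
  shows "nc_ext K g \<in> ncA K"
  unfolding ncA_def
proof (intro CollectI conjI allI impI ballI)
  show "nc_ext K g n x = (\<lambda>i j. 0)" if "\<not> (1 \<le> n \<and> x \<in> K n)" for n x
    using that unfolding nc_ext_def by auto
  show "is_mat n n (nc_ext K g n x)" for n x unfolding nc_ext_def is_mat_def by auto
  show "nc_ext K g n (dsum I d \<alpha> x) = dsum I d \<alpha> (\<lambda>i. nc_ext K g (d i) (x i))"
    if "dsum_data n I d \<alpha> \<and> (\<forall>i\<in>I. x i \<in> K (d i))" for n I d \<alpha> x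
    using nc_ext_dsum[OF K S g] that by blast
  show "nc_ext K g m (conj (mtr \<beta>) n x) = conj (mtr \<beta>) n (nc_ext K g n x)"
    if "1 \<le> n \<and> 1 \<le> m \<and> isom n m \<beta> \<and> x \<in> K n" for n m \<beta> x
    using nc_ext_compress[OF K S g] that by blast
  show "continuous_map (subtopology wtop (K n)) euclidean (nc_ext K g n)" if "1 \<le> n" for n
    using nc_ext_continuous[OF K S g that] .
qed

lemma rho_nc_ext:
  assumes K: "nc_convex K" and g: "g \<in> A1 K"
  shows "rho K (nc_ext K g) = g"
proof
  interpret L: additive_cone "level1_cone K" "homogenize g" by (rule additive_cone_level1_cone[OF K g])
  fix x
  show "rho K (nc_ext K g) x = g x"
  proof (cases "x \<in> K 1")
    case True
    have "homog_mat x 0 0 = (1, x 0 0)" by (simp add: homog_mat_def)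
    then show ?thesis
      using True L.mem_diffs level1_cone_point(1)[OF K True] level1_cone_point(2)[OF K True, of g]
      unfolding rho_def nc_ext_def by simp
  next
    case False
    then show ?thesis using g unfolding rho_def A1_def by auto
  qed
qed

section \<open>The restriction maps\<close>

lemma rho_in_A1:
  assumes K: "nc_convex K" and f: "f \<in> ncA K"
  shows "rho K f \<in> A1 K"
  unfolding A1_def
proof (intro CollectI conjI allI impI ballI)
  show "rho K f x = 0" if "x \<notin> K 1" for x using that unfolding rho_def by simp
  have "continuous_map (subtopology wtop (K 1)) euclidean (\<lambda>x. f 1 x 0 0)"
    using ncA_continuous[OF f, of 1] continuous_map_rmat_iff by blast
  then show "continuous_map (subtopology wtop (K 1)) euclidean (rho K f)"
    by (rule continuous_map_eq) (simp add: rho_def)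
  show "rho K f (ccomb t x y) = t * rho K f x + (1 - t) * rho K f y"
    if "x \<in> K 1" "y \<in> K 1" "t \<in> {0..1}" for x y t
    using nc_convex_ccomb[OF K _ that(1,2)] ncA_ccomb[OF K f _ that(1,2)] that(1-3)
    unfolding rho_def ccomb_def by simp
qed

lemma bij_betw_rho:
  assumes K: "nc_convex K" and S: "nc_symmetric K"
  shows "bij_betw (rho K) (ncA K) (A1 K)"
proof (rule bij_betw_imageI)
  show "inj_on (rho K) (ncA K)"
  proof (rule inj_onI)
    fix f h assume f: "f \<in> ncA K" and h: "h \<in> ncA K" and eq: "rho K f = rho K h"
    have "f 1 y 0 0 = h 1 y 0 0" if "y \<in> K 1" for y using fun_cong[OF eq, of y] that by (simp add: rho_def)
    then show "f = h" by (rule ncA_eqI_level1[OF K S f h])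
  qed
  show "rho K ` ncA K = A1 K"
    using rho_in_A1[OF K] rho_nc_ext[OF K] nc_ext_in_ncA[OF K S] by (auto intro!: image_eqI)
qed

lemma psd_00_nonneg:
  assumes "psd n A" "1 \<le> n"
  shows "0 \<le> A 0 0"
proof -
  have "0 \<le> (\<Sum>i<n. \<Sum>j<n. unit_vec 0 i * A i j * unit_vec 0 j)" using assms(1) unfolding psd_def by blast
  also have "\<dots> = A 0 0" using sum_unit_vec[of 0 n 0 A] assms(2) by (simp add: mult_ac)
  finally show ?thesis .
qed

lemma ncpos_iff_level1:
  assumes K: "nc_convex K" and S: "nc_symmetric K" and f: "f \<in> ncA K"
  shows "ncpos K f \<longleftrightarrow> (\<forall>x\<in>K 1. 0 \<le> rho K f x)"
proof
  assume "ncpos K f"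
  then show "\<forall>x\<in>K 1. 0 \<le> rho K f x" unfolding ncpos_def rho_def using psd_00_nonneg by fastforce
next
  assume "\<forall>x\<in>K 1. 0 \<le> rho K f x"
  then show "ncpos K f"
    by (intro ncpos_if_level1_nonneg[OF K f _ ncA_symmetric[OF K S f]]) (auto simp: rho_def)
qed

lemma rho2_in_A2:
  assumes K: "nc_convex K" and f: "f \<in> ncA K"
  shows "rho2 K f \<in> A2 K"
  unfolding A2_def
proof (intro CollectI conjI allI impI ballI)
  show "rho2 K f x = (\<lambda>i j. 0)" if "x \<notin> K 2" for x using that unfolding rho2_def by simp
  show "is_mat 2 2 (rho2 K f x)" if "x \<in> K 2" for x
    using that ncA_is_mat[OF f _ that] unfolding rho2_def by simp
  show "continuous_map (subtopology wtop (K 2)) euclidean (rho2 K f)"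
    by (rule continuous_map_eq[OF ncA_continuous[OF f, of 2]]) (auto simp: rho2_def)
  show "rho2 K f (ccomb t x y) = ccomb t (rho2 K f x) (rho2 K f y)"
    if "x \<in> K 2" "y \<in> K 2" "t \<in> {0..1}" for x y t
    using nc_convex_ccomb[OF K _ that(1,2)] ncA_ccomb[OF K f _ that(1,2)] that(1-3)
    unfolding rho2_def by simp
qed

lemma inj_on_rho2:
  assumes K: "nc_convex K"
  shows "inj_on (rho2 K) (ncA K)"
proof (rule inj_onI)
  fix f h assume f: "f \<in> ncA K" and h: "h \<in> ncA K" and eq: "rho2 K f = rho2 K h"
  have "f 2 y = h 2 y" if "y \<in> K 2" for y using fun_cong[OF eq, of y] that by (simp add: rho2_def)
  then show "f = h" by (rule ncA_eqI_level2[OF K f h])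
qed

lemma ncadj_in_ncA:
  assumes f: "f \<in> ncA K"
  shows "ncadj f \<in> ncA K"
  unfolding ncA_def ncadj_def
proof (intro CollectI conjI allI impI ballI)
  show "mtr (f n x) = (\<lambda>i j. 0)" if "\<not> (1 \<le> n \<and> x \<in> K n)" for n x
    using ncA_zero_outside[OF f that] unfolding mtr_def by simp
  show "is_mat n n (mtr (f n x))" if "1 \<le> n" "x \<in> K n" for n x
    using is_mat_mtr[OF ncA_is_mat[OF f that]] .
  show "mtr (f n (dsum I d \<alpha> x)) = dsum I d \<alpha> (\<lambda>i. mtr (f (d i) (x i)))"
    if "dsum_data n I d \<alpha> \<and> (\<forall>i\<in>I. x i \<in> K (d i))" for n I d \<alpha> x
    using ncA_dsum[OF f, of n I d \<alpha> x] that by (simp add: mtr_dsum)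
  show "mtr (f m (conj (mtr \<beta>) n x)) = conj (mtr \<beta>) n (mtr (f n x))"
    if "1 \<le> n \<and> 1 \<le> m \<and> isom n m \<beta> \<and> x \<in> K n" for n m \<beta> x
    using ncA_compress[OF f, of n m \<beta> x] that by (simp add: mtr_conj)
  show "continuous_map (subtopology wtop (K n)) euclidean (\<lambda>x. mtr (f n x))" if "1 \<le> n" for n
    using ncA_continuous[OF f that] unfolding continuous_map_rmat_iff mtr_def by blast
qed

lemma ncpos_iff_level2:
  assumes K: "nc_convex K" and f: "f \<in> ncA K"
  shows "ncpos K f \<longleftrightarrow> (\<forall>x\<in>K 2. psd 2 (rho2 K f x))"
proof
  assume "ncpos K f"
  then show "\<forall>x\<in>K 2. psd 2 (rho2 K f x)" unfolding ncpos_def rho2_def by auto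
next
  assume "\<forall>x\<in>K 2. psd 2 (rho2 K f x)"
  then have psd2: "psd 2 (f 2 y)" if "y \<in> K 2" for y using that unfolding rho2_def by auto
  show "ncpos K f"
  proof (rule ncpos_if_level1_nonneg[OF K f])
    show "0 \<le> f 1 y 0 0" if "y \<in> K 1" for y
      using psd_00_nonneg[OF psd2[OF ncA_level1_via_level2(1)[OF K f that]]] ncA_level1_via_level2(2)[OF K f that]
      by simp
    show "f n x i j = f n x j i" for n x i j
    proof (cases "1 \<le> n \<and> x \<in> K n \<and> i < n \<and> j < n \<and> i \<noteq> j")
      case True
      then have n: "1 \<le> n" and x: "x \<in> K n" and ij: "i < n" "j < n" "i \<noteq> j" by auto
      show ?thesis
        using psd2[OF ncA_offdiag_entries(1)[OF K f n x ij]] ncA_offdiag_entries(2,3)[OF K f n x ij]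
        unfolding psd_def by simp
    next
      case False
      then show ?thesis using ncA_entry_eq_0[OF f] by (metis (full_types))
    qed
  qed
qed

theorem theorem6p10:
  fixes K :: "nat \<Rightarrow> ('f::real_normed_vector) emat set"
  shows
  "(compact_nc_convex K \<and> nc_symmetric K \<longrightarrow>
      bij_betw (rho K) (ncA K) (A1 K) \<and>
      (\<forall>f\<in>ncA K. ncnorm K f = norm1 K (rho K f)) \<and>
      (\<forall>f\<in>ncA K. ncpos K f \<longleftrightarrow> (\<forall>x\<in>K 1. 0 \<le> rho K f x)) \<and>
      rho K (ncunit K) = (\<lambda>x. if x \<in> K 1 then 1 else 0))
   \<and>
   (compact_nc_convex K \<longrightarrow>
      (\<forall>f\<in>ncA K. rho2 K f \<in> A2 K) \<and>
      inj_on (rho2 K) (ncA K) \<and>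
      (\<forall>f\<in>ncA K. norm2 K (rho2 K f) \<le> ncnorm K f) \<and>
      (\<forall>f\<in>ncA K. ncadj f \<in> ncA K \<and> rho2 K (ncadj f) = (\<lambda>x. mtr (rho2 K f x))) \<and>
      rho2 K (ncunit K) = (\<lambda>x. if x \<in> K 2 then (\<lambda>i j. if i = j \<and> i < 2 then 1 else 0) else (\<lambda>i j. 0)) \<and>
      (\<forall>f\<in>ncA K. ncpos K f \<longleftrightarrow> (\<forall>x\<in>K 2. psd 2 (rho2 K f x))) \<and>
      (\<forall>f\<in>ncA K. ncnorm K f \<le> 2 * norm2 K (rho2 K f)))"
proof (intro conjI impI ballI)
  assume "compact_nc_convex K \<and> nc_symmetric K"
  then have KC: "compact_nc_convex K" and K: "nc_convex K" and S: "nc_symmetric K"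
    unfolding compact_nc_convex_def by auto
  show "bij_betw (rho K) (ncA K) (A1 K)" by (rule bij_betw_rho[OF K S])
  show "ncnorm K f = norm1 K (rho K f)" if "f \<in> ncA K" for f by (rule ncnorm_eq_norm1[OF KC S that])
  show "ncpos K f \<longleftrightarrow> (\<forall>x\<in>K 1. 0 \<le> rho K f x)" if "f \<in> ncA K" for f by (rule ncpos_iff_level1[OF K S that])
  show "rho K (ncunit K) = (\<lambda>x. if x \<in> K 1 then 1 else 0)" by (simp add: fun_eq_iff rho_def ncunit_def)
next
  assume KC: "compact_nc_convex K"
  then have K: "nc_convex K" unfolding compact_nc_convex_def by simp
  show "rho2 K f \<in> A2 K" if "f \<in> ncA K" for f by (rule rho2_in_A2[OF K that])
  show "inj_on (rho2 K) (ncA K)" by (rule inj_on_rho2[OF K])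
  show "norm2 K (rho2 K f) \<le> ncnorm K f" if "f \<in> ncA K" for f by (simp add: ncnorm_eq_norm2[OF KC that])
  show "ncadj f \<in> ncA K" if "f \<in> ncA K" for f by (rule ncadj_in_ncA[OF that])
  show "rho2 K (ncadj f) = (\<lambda>x. mtr (rho2 K f x))" for f by (simp add: fun_eq_iff rho2_def ncadj_def mtr_def)
  show "rho2 K (ncunit K) = (\<lambda>x. if x \<in> K 2 then (\<lambda>i j. if i = j \<and> i < 2 then 1 else 0) else (\<lambda>i j. 0))"
    by (simp add: fun_eq_iff rho2_def ncunit_def)
  show "ncpos K f \<longleftrightarrow> (\<forall>x\<in>K 2. psd 2 (rho2 K f x))" if "f \<in> ncA K" for f by (rule ncpos_iff_level2[OF K that])
  \<comment> \<open>in fact \<open>\<parallel>f\<parallel> = \<parallel>f|\<^bsub>K\<^sub>2\<^esub>\<parallel>\<close>\<close>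
  show "ncnorm K f \<le> 2 * norm2 K (rho2 K f)" if "f \<in> ncA K" for f
    using ncnorm_eq_norm2[OF KC that] norm2_nonneg[OF KC that] by simp
qed

end
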